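(* Let $1\leq s\leq\infty$ and $n\geq 2$. Let $\lambda$ be an arc of class $\mathcal{C}^s$ in $\mathbb{R}^n$ and let $\Omega$ be a neighborhood of $\lambda$. Then there is a simple closed curve $\gamma$ of class $\mathcal{C}^s$ in $\mathbb{R}^n$ that contains $\lambda$ and is contained in $\Omega$.
   Context: An arc of class $\mathcal{C}^s$ is the image of an injective $\mathcal{C}^s$ map of a closed interval with nowhere-vanishing derivative; a simple closed curve of class $\mathcal{C}^s$ is the image of an injective $\mathcal{C}^s$ map of the unit circle with nowhere-vanishing derivative. Neighborhoods are open. *)

theory Defs
  imports "HOL-Analysis.Analysis" "HOL-Library.Extended_Nat"
begin

text \<open>k-times continuously differentiable on a set S (derivatives taken within S,
  i.e. one-sided at the endpoints of a closed interval).\<close>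
fun Ck_on :: "nat \<Rightarrow> real set \<Rightarrow> (real \<Rightarrow> 'a::real_normed_vector) \<Rightarrow> bool" where
  "Ck_on 0 S f = continuous_on S f"
| "Ck_on (Suc k) S f =
     (\<exists>f'. (\<forall>t\<in>S. (f has_vector_derivative f' t) (at t within S)) \<and> Ck_on k S f')"

definition Cs_on :: "enat \<Rightarrow> real set \<Rightarrow> (real \<Rightarrow> 'a::real_normed_vector) \<Rightarrow> bool" where
  "Cs_on s S f = (if s = \<infinity> then (\<forall>k. Ck_on k S f) else Ck_on (the_enat s) S f)"

definition arc_Cs :: "enat \<Rightarrow> 'a::real_normed_vector set \<Rightarrow> bool" where
  "arc_Cs s L = (\<exists>a b (c :: real \<Rightarrow> 'a). a < b \<and> Cs_on s {a..b} c \<and> inj_on c {a..b} \<and>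
      (\<forall>t\<in>{a..b}. vector_derivative c (at t within {a..b}) \<noteq> 0) \<and> L = c ` {a..b})"

text \<open>A simple closed curve of class C^s: image of an injective C^s map of the circle
  with nowhere-vanishing derivative; maps of the circle R/Z are represented by their
  1-periodic lifts to R.\<close>
definition simple_closed_curve_Cs :: "enat \<Rightarrow> 'a::real_normed_vector set \<Rightarrow> bool" where
  "simple_closed_curve_Cs s G = (\<exists>g :: real \<Rightarrow> 'a. Cs_on s UNIV g \<and> (\<forall>t. g (t + 1) = g t) \<and>
      inj_on g {0..<1} \<and> (\<forall>t. vector_derivative g (at t) \<noteq> 0) \<and> G = g ` {0..1})"

end

theory Submission
  imports Defs "HOL-Computational_Algebra.Polynomial"
begin

(* Extend a C^s parametrisation c of the arc to a C^s map E on the whole line, using Borel's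
   lemma to prescribe the one-sided jets of c at the endpoints, and choose a smooth field u that is
   nowhere parallel to E' along the arc. Then F (t, \<sigma>) = E t + \<sigma> u t is an immersion of a thin strip
   around the segment [a, b] \<times> {0}; it is injective on the strip, being injective on the segment and
   locally injective near it, and maps the strip into \<Omega>. The required simple closed curve is the
   image under F of a smooth simple loop in the strip that runs along the whole segment. *)

section \<open>Maps of class C^k on sets of reals\<close>

lemma Ck_on_imp_continuous_on: "Ck_on k S f \<Longrightarrow> continuous_on S f"
  by (cases k) (auto intro: continuous_on_vector_derivative)

lemma Ck_on_Suc_imp_Ck_on: "Ck_on (Suc k) S f \<Longrightarrow> Ck_on k S f"
proof (induction k arbitrary: f)
  case 0
  then show ?case using Ck_on_imp_continuous_on[of "Suc 0" S f] by simp
next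
  case (Suc k)
  then obtain f' where "\<forall>t\<in>S. (f has_vector_derivative f' t) (at t within S)" "Ck_on (Suc k) S f'"
    by auto
  then show ?case using Suc.IH by auto
qed

lemma Ck_on_mono: "j \<le> k \<Longrightarrow> Ck_on k S f \<Longrightarrow> Ck_on j S f"
  by (induction k) (simp, metis Ck_on_Suc_imp_Ck_on le_SucE)

lemma Ck_on_SucI:
  "Ck_on k S f' \<Longrightarrow> (\<And>t. t \<in> S \<Longrightarrow> (f has_vector_derivative f' t) (at t within S)) \<Longrightarrow> Ck_on (Suc k) S f"
  by auto

lemma Ck_on_SucE:
  assumes "Ck_on (Suc k) UNIV f"
  obtains f' where "\<And>t. (f has_vector_derivative f' t) (at t)" "Ck_on k UNIV f'"
  using assms by auto

lemma Cs_on_iff_Ck_on: "Cs_on s S f \<longleftrightarrow> (\<forall>k. enat k \<le> s \<longrightarrow> Ck_on k S f)"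
  by (cases s) (auto simp: Cs_on_def intro: Ck_on_mono)

lemma Ck_on_const: "Ck_on k S (\<lambda>x. c)"
  by (induction k arbitrary: c) (auto intro!: exI[of _ "\<lambda>x. 0"] derivative_eq_intros)

lemma Ck_on_id: "Ck_on k S (\<lambda>x::real. x)"
  by (cases k) (auto intro!: exI[of _ "\<lambda>x. 1"] Ck_on_const derivative_eq_intros)

lemma Ck_on_add: "Ck_on k S f \<Longrightarrow> Ck_on k S g \<Longrightarrow> Ck_on k S (\<lambda>x. f x + g x)"
proof (induction k arbitrary: f g)
  case (Suc k)
  from Suc.prems obtain f' g' where
    "\<forall>t\<in>S. (f has_vector_derivative f' t) (at t within S)" "Ck_on k S f'"
    "\<forall>t\<in>S. (g has_vector_derivative g' t) (at t within S)" "Ck_on k S g'"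
    by auto
  then show ?case
    by (auto intro!: exI[of _ "\<lambda>x. f' x + g' x"] has_vector_derivative_add Suc.IH)
qed (auto intro: continuous_on_add)

lemma Ck_on_minus: "Ck_on k S f \<Longrightarrow> Ck_on k S (\<lambda>x. - f x)"
proof (induction k arbitrary: f)
  case (Suc k)
  from Suc.prems obtain f' where
    "\<forall>t\<in>S. (f has_vector_derivative f' t) (at t within S)" "Ck_on k S f'"
    by auto
  then show ?case
    by (auto intro!: exI[of _ "\<lambda>x. - f' x"] has_vector_derivative_minus Suc.IH)
qed (auto intro: continuous_on_minus)

lemma Ck_on_diff: "Ck_on k S f \<Longrightarrow> Ck_on k S g \<Longrightarrow> Ck_on k S (\<lambda>x. f x - g x)"
  using Ck_on_add[of k S f "\<lambda>x. - g x"] Ck_on_minus[of k S g] by simp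

lemma Ck_on_sum:
  "finite I \<Longrightarrow> (\<And>i. i \<in> I \<Longrightarrow> Ck_on k S (f i)) \<Longrightarrow> Ck_on k S (\<lambda>x. \<Sum>i\<in>I. f i x)"
  by (induction I rule: finite_induct) (auto intro: Ck_on_add Ck_on_const)

lemma Ck_on_scaleR:
  fixes \<phi> :: "real \<Rightarrow> real"
  shows "Ck_on k S \<phi> \<Longrightarrow> Ck_on k S f \<Longrightarrow> Ck_on k S (\<lambda>x. \<phi> x *\<^sub>R f x)"
proof (induction k arbitrary: \<phi> f)
  case (Suc k)
  from Suc.prems obtain f' \<phi>' where
    f': "\<forall>t\<in>S. (f has_vector_derivative f' t) (at t within S)" "Ck_on k S f'" and
    \<phi>': "\<forall>t\<in>S. (\<phi> has_vector_derivative \<phi>' t) (at t within S)" "Ck_on k S \<phi>'"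
    by auto
  have "Ck_on k S f" "Ck_on k S \<phi>"
    using Suc.prems Ck_on_Suc_imp_Ck_on by blast+
  then have "Ck_on k S (\<lambda>x. \<phi> x *\<^sub>R f' x + \<phi>' x *\<^sub>R f x)"
    using Suc.IH f' \<phi>' by (auto intro: Ck_on_add)
  moreover have "((\<lambda>x. \<phi> x *\<^sub>R f x) has_vector_derivative \<phi> t *\<^sub>R f' t + \<phi>' t *\<^sub>R f t) (at t within S)"
    if "t \<in> S" for t
    using f' \<phi>' that
    by (auto intro!: has_vector_derivative_scaleR simp: has_real_derivative_iff_has_vector_derivative)
  ultimately show ?case by (rule Ck_on_SucI)
qed (auto intro: continuous_on_scaleR)

lemma Ck_on_mult:
  fixes \<phi> \<psi> :: "real \<Rightarrow> real"
  shows "Ck_on k S \<phi> \<Longrightarrow> Ck_on k S \<psi> \<Longrightarrow> Ck_on k S (\<lambda>x. \<phi> x * \<psi> x)"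
  using Ck_on_scaleR[of k S \<phi> \<psi>] by simp

lemma Ck_on_compose:
  fixes g :: "real \<Rightarrow> real"
  shows "Ck_on k UNIV f \<Longrightarrow> Ck_on k UNIV g \<Longrightarrow> Ck_on k UNIV (\<lambda>x. f (g x))"
proof (induction k arbitrary: f g)
  case (Suc k)
  from Suc.prems obtain f' g' where
    f': "\<forall>t. (f has_vector_derivative f' t) (at t)" "Ck_on k UNIV f'" and
    g': "\<forall>t. (g has_vector_derivative g' t) (at t)" "Ck_on k UNIV g'"
    by auto
  have "Ck_on k UNIV f" "Ck_on k UNIV g"
    using Suc.prems Ck_on_Suc_imp_Ck_on by blast+
  then have "Ck_on k UNIV (\<lambda>x. g' x *\<^sub>R f' (g x))"
    using Suc.IH f' g' by (auto intro: Ck_on_scaleR)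
  moreover have "((\<lambda>x. f (g x)) has_vector_derivative g' t *\<^sub>R f' (g t)) (at t)" for t
    using vector_diff_chain_at[of g "g' t" t f "f' (g t)"] f' g' by (simp add: o_def)
  ultimately show ?case by (rule Ck_on_SucI)
qed (auto intro: continuous_on_compose2[OF _ _ subset_UNIV])

lemma Ck_on_inverse:
  fixes g :: "real \<Rightarrow> real"
  shows "Ck_on k UNIV g \<Longrightarrow> (\<And>x. g x \<noteq> 0) \<Longrightarrow> Ck_on k UNIV (\<lambda>x. inverse (g x))"
proof (induction k arbitrary: g)
  case (Suc k)
  from Suc.prems obtain g' where
    g': "\<forall>t. (g has_real_derivative g' t) (at t)" "Ck_on k UNIV g'"
    by (auto simp: has_real_derivative_iff_has_vector_derivative)
  have "Ck_on k UNIV (\<lambda>x. inverse (g x))"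
    using Suc Ck_on_Suc_imp_Ck_on by blast
  then have "Ck_on k UNIV (\<lambda>x. - (g' x * (inverse (g x) * inverse (g x))))"
    using g' by (intro Ck_on_minus Ck_on_mult) auto
  moreover have
    "((\<lambda>x. inverse (g x)) has_vector_derivative - (g' t * (inverse (g t) * inverse (g t)))) (at t)" for t
    unfolding has_real_derivative_iff_has_vector_derivative[symmetric]
    using g'(1) Suc.prems(2)[of t] by (auto intro!: derivative_eq_intros simp: power2_eq_square)
  ultimately show ?case by (rule Ck_on_SucI)
qed (auto intro: continuous_on_inverse)

definition vderiv_tower_on :: "nat \<Rightarrow> real set \<Rightarrow> (nat \<Rightarrow> real \<Rightarrow> 'a::real_normed_vector) \<Rightarrow> bool" where
  "vderiv_tower_on k S D \<longleftrightarrow>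
     (\<forall>i<k. \<forall>x\<in>S. (D i has_vector_derivative D (Suc i) x) (at x within S)) \<and> continuous_on S (D k)"

lemma vderiv_tower_on_Suc:
  "vderiv_tower_on (Suc k) S D \<longleftrightarrow>
     (\<forall>x\<in>S. (D 0 has_vector_derivative D (Suc 0) x) (at x within S)) \<and> vderiv_tower_on k S (\<lambda>i. D (Suc i))"
  unfolding vderiv_tower_on_def by (auto simp: less_Suc_eq_0_disj)

lemma Ck_on_of_vderiv_tower_on: "vderiv_tower_on k S D \<Longrightarrow> Ck_on k S (D 0)"
proof (induction k arbitrary: D)
  case (Suc k)
  then show ?case
    using Suc.IH[of "\<lambda>i. D (Suc i)"] by (auto simp: vderiv_tower_on_Suc)
qed (simp add: vderiv_tower_on_def)

lemma vderiv_tower_on_cong: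
  assumes "\<And>i x. x \<in> S \<Longrightarrow> D i x = D' i x" "vderiv_tower_on k S D"
  shows "vderiv_tower_on k S D'"
  unfolding vderiv_tower_on_def
proof (intro conjI allI impI ballI)
  show "(D' i has_vector_derivative D' (Suc i) x) (at x within S)" if "i < k" "x \<in> S" for i x
    using has_vector_derivative_transform[OF \<open>x \<in> S\<close> assms(1)[symmetric]] assms that
    by (auto simp: vderiv_tower_on_def)
  show "continuous_on S (D' k)"
    using continuous_on_eq assms by (fastforce simp: vderiv_tower_on_def)
qed

lemma has_vector_derivative_on_closed_Un:
  assumes "closed S" "closed T"
    and "\<forall>x\<in>S. (f has_vector_derivative f' x) (at x within S)"
    and "\<forall>x\<in>T. (f has_vector_derivative f' x) (at x within T)"
  shows "\<forall>x\<in>S \<union> T. (f has_vector_derivative f' x) (at x within S \<union> T)"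
proof
  fix x
  have "(f has_vector_derivative f' x) (at x within U)" if "closed U"
    "\<forall>x\<in>U. (f has_vector_derivative f' x) (at x within U)" for U
  proof (cases "x \<in> U")
    case False
    then have "at x within U = bot"
      using \<open>closed U\<close> by (metis closed_limpt trivial_limit_within)
    then show ?thesis
      unfolding has_vector_derivative_def by (simp add: has_derivative_bot bounded_linear_scaleR_left)
  qed (use that in blast)
  then show "(f has_vector_derivative f' x) (at x within S \<union> T)"
    using assms unfolding has_vector_derivative_def has_derivative_within Lim_within_Un by blast
qed

lemma vderiv_tower_on_closed_Un:
  assumes "closed S" "closed T" "vderiv_tower_on k S D" "vderiv_tower_on k T D"
  shows "vderiv_tower_on k (S \<union> T) D"
  unfolding vderiv_tower_on_def
proof (intro conjI allI impI)
  fix i assume "i < k"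
  then show "\<forall>x\<in>S \<union> T. (D i has_vector_derivative D (Suc i) x) (at x within S \<union> T)"
    using assms(3,4)
    by (intro has_vector_derivative_on_closed_Un[OF assms(1,2)]) (auto simp: vderiv_tower_on_def)
next
  show "continuous_on (S \<union> T) (D k)"
    using assms by (simp add: vderiv_tower_on_def continuous_on_closed_Un)
qed

lemma Ck_on_infinite_tower:
  assumes "\<And>i x. (D i has_vector_derivative D (Suc i) x) (at x)"
  shows "Ck_on k UNIV (D 0)"
proof (rule Ck_on_of_vderiv_tower_on)
  have "continuous_on UNIV (D k)"
    using assms[of k] by (auto intro: continuous_on_vector_derivative has_vector_derivative_at_within)
  then show "vderiv_tower_on k UNIV D"
    using assms by (simp add: vderiv_tower_on_def)
qed

primrec higher_vderiv :: "real set \<Rightarrow> nat \<Rightarrow> (real \<Rightarrow> 'a::real_normed_vector) \<Rightarrow> real \<Rightarrow> 'a" where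
  "higher_vderiv S 0 f = f"
| "higher_vderiv S (Suc i) f = (\<lambda>x. vector_derivative (higher_vderiv S i f) (at x within S))"

lemma higher_vderiv_Suc_eq:
  assumes S: "\<And>x. x \<in> S \<Longrightarrow> at x within S \<noteq> bot"
    and f': "\<And>t. t \<in> S \<Longrightarrow> (f has_vector_derivative f' t) (at t within S)" and "t \<in> S"
  shows "higher_vderiv S (Suc i) f t = higher_vderiv S i f' t"
  using \<open>t \<in> S\<close>
proof (induction i arbitrary: t)
  case 0
  then show ?case using vector_derivative_within[OF S f'] by simp
next
  case (Suc i)
  have "(higher_vderiv S (Suc i) f has_vector_derivative v) (at t within S) \<longleftrightarrow>
      (higher_vderiv S i f' has_vector_derivative v) (at t within S)" for v
    using Suc has_vector_derivative_transform by metis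
  then show ?case by (simp add: vector_derivative_def)
qed

lemma Ck_on_higher_vderiv:
  assumes nontriv: "\<And>x. x \<in> S \<Longrightarrow> at x within S \<noteq> bot"
  shows "Ck_on k S f \<Longrightarrow> vderiv_tower_on k S (\<lambda>i. higher_vderiv S i f)"
proof (induction k arbitrary: f)
  case (Suc k)
  then obtain f' where f': "\<forall>t\<in>S. (f has_vector_derivative f' t) (at t within S)" "Ck_on k S f'"
    by auto
  have shift: "higher_vderiv S (Suc i) f t = higher_vderiv S i f' t" if "t \<in> S" for i t
    using higher_vderiv_Suc_eq[OF nontriv] f'(1) that by blast
  have "vderiv_tower_on k S (\<lambda>i. higher_vderiv S (Suc i) f)"
    using vderiv_tower_on_cong[OF _ Suc.IH[OF f'(2)]] shift by metis
  moreover have "\<forall>t\<in>S. (f has_vector_derivative higher_vderiv S (Suc 0) f t) (at t within S)"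
    using f'(1) shift[of _ 0] by simp
  ultimately show ?case
    by (simp add: vderiv_tower_on_Suc)
qed (simp add: vderiv_tower_on_def)

section \<open>Flat functions and smooth steps\<close>

lemma poly_times_exp_minus_at_top: "((\<lambda>z::real. poly q z * exp (- z)) \<longlongrightarrow> 0) at_top"
proof -
  have "((\<lambda>z::real. \<Sum>i\<le>degree q. coeff q i * (z ^ i / exp z)) \<longlongrightarrow> (\<Sum>i\<le>degree q. coeff q i * 0)) at_top"
    by (intro tendsto_sum tendsto_mult tendsto_const tendsto_power_div_exp_0)
  moreover have "(\<Sum>i\<le>degree q. coeff q i * (z ^ i / exp z)) = poly q z * exp (- z)" for z :: real
    by (simp add: poly_altdef sum_distrib_right exp_minus divide_inverse mult.assoc)
  ultimately show ?thesis by simp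
qed

definition flat_exp :: "real \<Rightarrow> real" where
  "flat_exp x = (if x > 0 then exp (- inverse x) else 0)"

(* d/dx (p (1/x) * exp (-1/x)) = q (1/x) * exp (-1/x) with q y = y^2 * (p y - p' y). *)
primrec flat_exp_poly :: "nat \<Rightarrow> real poly" where
  "flat_exp_poly 0 = 1"
| "flat_exp_poly (Suc k) = [:0,0,1:] * (flat_exp_poly k - pderiv (flat_exp_poly k))"

definition flat_exp_deriv :: "nat \<Rightarrow> real \<Rightarrow> real" where
  "flat_exp_deriv k x = (if x > 0 then poly (flat_exp_poly k) (inverse x) * exp (- inverse x) else 0)"

lemma flat_exp_deriv_0 [simp]: "flat_exp_deriv 0 = flat_exp"
  by (auto simp: flat_exp_deriv_def flat_exp_def fun_eq_iff)

lemma flat_exp_deriv_pos: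
  assumes "x > 0"
  shows "(flat_exp_deriv k has_real_derivative flat_exp_deriv (Suc k) x) (at x)"
proof -
  let ?p = "flat_exp_poly k"
  have inv: "((\<lambda>x. inverse x) has_real_derivative -(inverse x ^ 2)) (at x)"
    using assms by (auto intro!: derivative_eq_intros simp: power2_eq_square)
  have "((\<lambda>x. poly ?p (inverse x) * exp (- inverse x)) has_real_derivative
          poly (flat_exp_poly (Suc k)) (inverse x) * exp (- inverse x)) (at x)"
    by (rule DERIV_cong[OF DERIV_mult[OF DERIV_chain2[OF poly_DERIV inv]
          DERIV_chain2[OF DERIV_exp DERIV_minus[OF inv]]]])
      (simp add: algebra_simps power2_eq_square)
  then show ?thesis
    using assms
    by (auto simp: flat_exp_deriv_def
        intro: has_field_derivative_transform_within_open[where S="{0<..}"])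
qed

lemma flat_exp_deriv_at_0: "(flat_exp_deriv k has_real_derivative 0) (at 0)"
proof -
  have "((\<lambda>y. (flat_exp_deriv k y - flat_exp_deriv k 0) / (y - 0)) \<longlongrightarrow> 0) (at_right 0)"
  proof (rule Lim_transform_eventually)
    have "((\<lambda>y. poly q (inverse y) * exp (- inverse y)) \<longlongrightarrow> 0) (at_right 0)" for q :: "real poly"
      using filterlim_compose[OF poly_times_exp_minus_at_top[of q] filterlim_inverse_at_top_right]
      unfolding o_def .
    then show "((\<lambda>y. poly ([:0,1:] * flat_exp_poly k) (inverse y) * exp (- inverse y)) \<longlongrightarrow> 0) (at_right 0)" .
    show "\<forall>\<^sub>F y in at_right 0. poly ([:0,1:] * flat_exp_poly k) (inverse y) * exp (- inverse y)
           = (flat_exp_deriv k y - flat_exp_deriv k 0) / (y - 0)"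
      by (auto simp: flat_exp_deriv_def eventually_at_right_field divide_inverse intro!: exI[of _ 1])
  qed
  moreover have "((\<lambda>y. (flat_exp_deriv k y - flat_exp_deriv k 0) / (y - 0)) \<longlongrightarrow> 0) (at_left 0)"
    by (rule tendsto_eventually)
      (auto simp: flat_exp_deriv_def eventually_at_left_field intro!: exI[of _ "-1"])
  ultimately show ?thesis
    by (simp add: has_field_derivative_iff filterlim_at_split)
qed

lemma flat_exp_deriv_has_derivative:
  "(flat_exp_deriv k has_real_derivative flat_exp_deriv (Suc k) x) (at x)"
proof -
  consider "x > 0" | "x = 0" | "x < 0" by linarith
  then show ?thesis
  proof cases
    case 3
    have "(flat_exp_deriv k has_real_derivative 0) (at x)"
      by (rule has_field_derivative_transform_within_open[where f="\<lambda>x. 0" and S="{..<0}"])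
        (use 3 in \<open>auto simp: flat_exp_deriv_def\<close>)
    then show ?thesis
      using 3 by (simp add: flat_exp_deriv_def)
  qed (use flat_exp_deriv_pos flat_exp_deriv_at_0 in \<open>auto simp: flat_exp_deriv_def\<close>)
qed

lemma Ck_on_flat_exp: "Ck_on k UNIV flat_exp"
  using Ck_on_infinite_tower[of flat_exp_deriv k] flat_exp_deriv_has_derivative
  by (simp add: has_real_derivative_iff_has_vector_derivative)

lemma flat_exp_nonpos: "x \<le> 0 \<Longrightarrow> flat_exp x = 0"
  by (simp add: flat_exp_def)

lemma flat_exp_nonneg: "flat_exp x \<ge> 0"
  by (simp add: flat_exp_def)

lemma flat_exp_less_1: "flat_exp x < 1"
  by (simp add: flat_exp_def)

lemma flat_exp_eq_iff: "flat_exp x = flat_exp y \<longleftrightarrow> x = y \<or> (x \<le> 0 \<and> y \<le> 0)"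
  by (auto simp: flat_exp_def)

lemma flat_exp_deriv_Suc_0_pos: "x > 0 \<Longrightarrow> flat_exp_deriv (Suc 0) x > 0"
  by (simp add: flat_exp_deriv_def)

lemma Ck_on_sin_cos: "Ck_on k UNIV (\<lambda>x. A * sin (w * x) + B * cos (w * x))"
proof (induction k arbitrary: A B)
  case (Suc k)
  have "((\<lambda>x. A * sin (w * x) + B * cos (w * x)) has_real_derivative
         (- (B * w)) * sin (w * t) + (A * w) * cos (w * t)) (at t)" for t
    by (auto intro!: derivative_eq_intros simp: algebra_simps)
  then show ?case
    by (intro Ck_on_SucI[OF Suc.IH[of "- (B * w)" "A * w"]])
      (simp add: has_real_derivative_iff_has_vector_derivative)
qed (auto intro!: continuous_intros)

lemma Ck_on_sin: "Ck_on k UNIV (\<lambda>x. sin (w * x))"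
  using Ck_on_sin_cos[of k 1 w 0] by simp

lemma Ck_on_cos: "Ck_on k UNIV (\<lambda>x. cos (w * x))"
  using Ck_on_sin_cos[of k 0 w 1] by simp

definition smooth_step :: "real \<Rightarrow> real" where
  "smooth_step x = flat_exp x / (flat_exp x + flat_exp (1 - x))"

lemma smooth_step_denom_pos: "flat_exp x + flat_exp (1 - x) > 0"
  by (cases "x > 0") (auto simp: flat_exp_def add_pos_nonneg add_nonneg_pos)

lemma Ck_on_smooth_step: "Ck_on k UNIV smooth_step"
proof -
  have "Ck_on k UNIV (\<lambda>x. flat_exp (1 - x))"
    by (intro Ck_on_compose[OF Ck_on_flat_exp] Ck_on_diff Ck_on_const Ck_on_id)
  then have "Ck_on k UNIV (\<lambda>x. flat_exp x * inverse (flat_exp x + flat_exp (1 - x)))"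
    using smooth_step_denom_pos
    by (intro Ck_on_mult Ck_on_flat_exp Ck_on_inverse Ck_on_add) (auto simp: less_le)
  then show ?thesis by (simp add: smooth_step_def[abs_def] divide_inverse)
qed

lemma smooth_step_eq_0: "x \<le> 0 \<Longrightarrow> smooth_step x = 0"
  by (simp add: smooth_step_def flat_exp_def)

lemma smooth_step_eq_1: "x \<ge> 1 \<Longrightarrow> smooth_step x = 1"
  using smooth_step_denom_pos[of x] by (simp add: smooth_step_def flat_exp_nonpos)

lemma smooth_step_bounds: "0 \<le> smooth_step x" "smooth_step x \<le> 1"
  using smooth_step_denom_pos[of x] flat_exp_nonneg[of x] flat_exp_nonneg[of "1 - x"]
  by (auto simp: smooth_step_def divide_le_eq_1)

definition smooth_bump :: "real \<Rightarrow> real" where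
  "smooth_bump x = smooth_step ((4 - 4 * x\<^sup>2) / 3)"

lemma Ck_on_smooth_bump: "Ck_on k UNIV smooth_bump"
proof -
  have "Ck_on k UNIV (\<lambda>x. smooth_step ((4 - 4 * (x * x)) * (1/3)))"
    by (intro Ck_on_compose[OF Ck_on_smooth_step] Ck_on_mult Ck_on_diff Ck_on_const Ck_on_id)
  then show ?thesis by (simp add: smooth_bump_def[abs_def] power2_eq_square)
qed

lemma smooth_bump_eq_1: "\<bar>x\<bar> \<le> 1/2 \<Longrightarrow> smooth_bump x = 1"
  unfolding smooth_bump_def
  by (rule smooth_step_eq_1) (simp add: abs_le_square_iff[of x "1/2", simplified] power2_eq_square)

lemma smooth_bump_eq_0: "\<bar>x\<bar> \<ge> 1 \<Longrightarrow> smooth_bump x = 0"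
  unfolding smooth_bump_def
  by (rule smooth_step_eq_0) (simp add: abs_le_square_iff[of 1 x, simplified])

section \<open>Borel's lemma\<close>

lemma smooth_higher_vderiv:
  assumes "\<And>k. Ck_on k UNIV f"
  shows "(higher_vderiv UNIV i f has_vector_derivative higher_vderiv UNIV (Suc i) f x) (at x)"
  using Ck_on_higher_vderiv[OF _ assms[of "Suc i"]] by (simp add: vderiv_tower_on_def)

lemma higher_vderiv_tower:
  assumes "\<And>i x. (D i has_vector_derivative D (Suc i) x) (at x)"
  shows "higher_vderiv UNIV i (D 0) = D i"
proof (induction i)
  case (Suc i)
  show ?case using vector_derivative_at[OF assms] by (simp add: Suc fun_eq_iff)
qed simp

lemma higher_vderiv_eq_on_open:
  assumes "\<And>k. Ck_on k UNIV f" "open U" "\<And>x. x \<in> U \<Longrightarrow> f x = g x" "x \<in> U"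
  shows "higher_vderiv UNIV i f x = higher_vderiv UNIV i g x"
  using assms(4)
proof (induction i arbitrary: x)
  case (Suc i)
  have "(higher_vderiv UNIV i g has_vector_derivative higher_vderiv UNIV (Suc i) f x) (at x)"
    using has_vector_derivative_transform_within_open[OF smooth_higher_vderiv[OF assms(1)] assms(2)]
      Suc by auto
  then show ?case by (simp add: vector_derivative_at)
qed (use assms(3) in simp)

lemma higher_vderiv_monomial:
  "higher_vderiv UNIV i (\<lambda>y. y ^ j / fact j) = (\<lambda>y::real. if i \<le> j then y ^ (j - i) / fact (j - i) else 0)"
proof -
  define D where "D i y = (if i \<le> j then y ^ (j - i) / fact (j - i) else (0::real))" for i y
  have "(D i has_real_derivative D (Suc i) y) (at y)" for i y
  proof (cases "i < j")
    case True
    then obtain d where d: "j - i = Suc d" "j - Suc i = d"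
      by (metis Suc_diff_Suc)
    have "((\<lambda>y. y ^ Suc d / fact (Suc d)) has_real_derivative real (Suc d) * y ^ d / fact (Suc d)) (at y)"
      by (intro DERIV_cdivide) (use DERIV_pow[of "Suc d" y] in simp)
    then show ?thesis
      using True d by (simp add: D_def[abs_def] fact_Suc del: of_nat_Suc)
  next
    case False
    then show ?thesis by (cases "i = j") (auto simp: D_def[abs_def])
  qed
  then have "higher_vderiv UNIV i (D 0) = D i"
    by (intro higher_vderiv_tower) (simp add: has_real_derivative_iff_has_vector_derivative)
  then show ?thesis by (simp add: D_def[abs_def])
qed

lemma Ck_on_power: "Ck_on k S (\<lambda>x::real. x ^ j)"
  by (induction j) (auto intro: Ck_on_mult Ck_on_id Ck_on_const)

definition jet_bump :: "nat \<Rightarrow> real \<Rightarrow> real" where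
  "jet_bump j y = y ^ j / fact j * smooth_bump y"

lemma Ck_on_jet_bump: "Ck_on k UNIV (jet_bump j)"
  unfolding jet_bump_def[abs_def] divide_inverse
  by (intro Ck_on_mult Ck_on_power Ck_on_const Ck_on_smooth_bump)

lemma higher_vderiv_jet_bump_0: "higher_vderiv UNIV i (jet_bump j) 0 = (if i = j then 1 else 0)"
proof -
  have "higher_vderiv UNIV i (jet_bump j) 0 = higher_vderiv UNIV i (\<lambda>y. y ^ j / fact j) 0"
    by (rule higher_vderiv_eq_on_open[where U="{-1/2<..<1/2}"])
      (auto intro: Ck_on_jet_bump simp: jet_bump_def smooth_bump_eq_1)
  then show ?thesis by (simp add: higher_vderiv_monomial)
qed

lemma higher_vderiv_jet_bump_outside: "1 < \<bar>y\<bar> \<Longrightarrow> higher_vderiv UNIV i (jet_bump j) y = 0"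
proof -
  assume y: "1 < \<bar>y\<bar>"
  have "open {y::real. 1 < \<bar>y\<bar>}"
    by (intro open_Collect_less continuous_intros)
  then have "higher_vderiv UNIV i (jet_bump j) y = higher_vderiv UNIV i (\<lambda>y. 0) y"
    by (rule higher_vderiv_eq_on_open[OF Ck_on_jet_bump])
      (use y in \<open>auto simp: jet_bump_def smooth_bump_eq_0\<close>)
  also have "higher_vderiv UNIV i (\<lambda>y. 0 :: real) = (\<lambda>y. 0)"
    by (induction i) auto
  finally show ?thesis by simp
qed

lemma higher_vderiv_jet_bump_bounded: "\<exists>B\<ge>0. \<forall>y. \<bar>higher_vderiv UNIV i (jet_bump j) y\<bar> \<le> B"
proof -
  let ?f = "higher_vderiv UNIV i (jet_bump j)"
  have "continuous_on UNIV ?f"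
    using smooth_higher_vderiv[OF Ck_on_jet_bump]
    by (intro continuous_at_imp_continuous_on ballI has_vector_derivative_continuous)
  then have "bounded (?f ` {-1..1})"
    by (auto intro: compact_imp_bounded compact_continuous_image continuous_on_subset)
  then obtain B where B: "\<forall>y\<in>{-1..1}. \<bar>?f y\<bar> \<le> B"
    by (auto simp: bounded_iff)
  have "\<bar>?f y\<bar> \<le> max B 0" for y
    using B[rule_format, of y] higher_vderiv_jet_bump_outside[of y i j]
    by (cases "\<bar>y\<bar> \<le> 1") (auto simp: abs_le_iff)
  then show ?thesis by (intro exI[of _ "max B 0"]) auto
qed

(* The i-th derivative of x \<mapsto> c * \<epsilon> ^ j * jet_bump j (x / \<epsilon>), the j-th term of the series in
   Borel's lemma. *)
definition borel_term :: "real \<Rightarrow> real \<Rightarrow> nat \<Rightarrow> nat \<Rightarrow> real \<Rightarrow> real" where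
  "borel_term c \<epsilon> j i x = c * (\<epsilon> ^ j / \<epsilon> ^ i) * higher_vderiv UNIV i (jet_bump j) (x / \<epsilon>)"

lemma borel_term_has_derivative:
  assumes "\<epsilon> \<noteq> 0"
  shows "(borel_term c \<epsilon> j i has_real_derivative borel_term c \<epsilon> j (Suc i) x) (at x)"
proof -
  have "(higher_vderiv UNIV i (jet_bump j) has_real_derivative
      higher_vderiv UNIV (Suc i) (jet_bump j) (x / \<epsilon>))
      (at (x / \<epsilon>))"
    using smooth_higher_vderiv[OF Ck_on_jet_bump] by (simp add: has_real_derivative_iff_has_vector_derivative)
  from DERIV_cmult[OF DERIV_chain2[OF this DERIV_cdivide[OF DERIV_ident]], of "c * (\<epsilon> ^ j / \<epsilon> ^ i)"]
  show ?thesis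
    using assms by (simp add: borel_term_def[abs_def] field_simps)
qed

lemma borel_term_at_0: "\<epsilon> \<noteq> 0 \<Longrightarrow> borel_term c \<epsilon> j i 0 = (if i = j then c else 0)"
  by (simp add: borel_term_def higher_vderiv_jet_bump_0)

lemma borel_term_small:
  obtains \<epsilon> where "\<epsilon> > 0" "\<And>i x. i < j \<Longrightarrow> \<bar>borel_term c \<epsilon> j i x\<bar> \<le> (1/2) ^ j"
proof -
  have "\<forall>i. \<exists>B. B \<ge> 0 \<and> (\<forall>y. \<bar>higher_vderiv UNIV i (jet_bump j) y\<bar> \<le> B)"
    using higher_vderiv_jet_bump_bounded by blast
  then obtain B where B: "\<And>i y. \<bar>higher_vderiv UNIV i (jet_bump j) y\<bar> \<le> B i" "\<And>i. B i \<ge> 0"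
    by metis
  define M where "M = (1 + \<bar>c\<bar>) * (1 + (\<Sum>i<j. B i))"
  have "M \<ge> 1"
    using B(2) by (simp add: M_def sum_nonneg mult_ge1_I)
  define \<epsilon> where "\<epsilon> = 1 / (M * 2 ^ j)"
  have "M * 2 ^ j \<ge> 1"
    using \<open>M \<ge> 1\<close> by (simp add: mult_ge1_I)
  then have \<epsilon>: "0 < \<epsilon>" "\<epsilon> \<le> 1"
    by (auto simp: \<epsilon>_def)
  have "\<bar>borel_term c \<epsilon> j i x\<bar> \<le> (1/2) ^ j" if "i < j" for i x
  proof -
    have "\<bar>c\<bar> * B i \<le> M"
      unfolding M_def using B(2) member_le_sum[of i "{..<j}" B] that by (intro mult_mono) auto
    moreover have "\<epsilon> ^ (j - i) \<le> \<epsilon>"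
      using \<epsilon> that power_decreasing[of 1 "j - i" \<epsilon>] by simp
    ultimately have "(\<bar>c\<bar> * B i) * \<epsilon> ^ (j - i) \<le> M * \<epsilon>"
      using \<epsilon> \<open>M \<ge> 1\<close> by (intro mult_mono) auto
    moreover have "\<bar>borel_term c \<epsilon> j i x\<bar> \<le> (\<bar>c\<bar> * B i) * \<epsilon> ^ (j - i)"
    proof -
      have "\<epsilon> ^ j / \<epsilon> ^ i = \<epsilon> ^ (j - i)"
        using \<epsilon> that by (simp add: power_diff)
      then have "\<bar>borel_term c \<epsilon> j i x\<bar> = \<bar>c\<bar> * \<epsilon> ^ (j - i) * \<bar>higher_vderiv UNIV i (jet_bump j) (x / \<epsilon>)\<bar>"
        using \<epsilon> by (simp add: borel_term_def abs_mult)
      also have "\<dots> \<le> \<bar>c\<bar> * \<epsilon> ^ (j - i) * B i"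
        using \<epsilon> B(1) by (intro mult_left_mono) auto
      finally show ?thesis
        by (simp add: mult_ac)
    qed
    moreover have "M * \<epsilon> = (1/2) ^ j"
      using \<open>M \<ge> 1\<close> by (simp add: \<epsilon>_def power_one_over)
    ultimately show ?thesis by linarith
  qed
  with \<epsilon> that show ?thesis by blast
qed

lemma series_has_derivative_tower:
  fixes T :: "nat \<Rightarrow> nat \<Rightarrow> real \<Rightarrow> real"
  assumes deriv: "\<And>i j x. (T i j has_real_derivative T (Suc i) j x) (at x)"
    and bound: "\<And>i j x. i < j \<Longrightarrow> \<bar>T i j x\<bar> \<le> (1/2) ^ j"
  shows "((\<lambda>x. \<Sum>j. T i j x) has_real_derivative (\<Sum>j. T (Suc i) j x)) (at x)"
proof (rule has_field_derivative_series'(2)[of UNIV "T i" "T (Suc i)" 0])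
  show "summable (\<lambda>j. T i j 0)"
    by (rule summable_comparison_test'[of "\<lambda>j. (1/2::real) ^ j" "Suc i"])
      (use bound in \<open>auto intro: summable_geometric\<close>)
  show "uniformly_convergent_on UNIV (\<lambda>n x. \<Sum>j<n. T (Suc i) j x)"
  proof (rule Weierstrass_m_test'_ev[where M="\<lambda>j. (1/2::real) ^ j"])
    show "\<forall>\<^sub>F n in sequentially. \<forall>x\<in>UNIV. norm (T (Suc i) n x) \<le> (1 / 2) ^ n"
      unfolding eventually_sequentially by (intro exI[of _ "Suc (Suc i)"]) (auto intro!: bound)
  qed (auto intro: summable_geometric)
qed (use deriv in auto)

lemma borel_lemma_real:
  fixes m :: "nat \<Rightarrow> real"
  obtains H where "\<And>i x. (H i has_real_derivative H (Suc i) x) (at x)" "\<And>i. H i 0 = m i"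
proof -
  have "\<forall>j. \<exists>\<epsilon>. \<epsilon> > 0 \<and> (\<forall>i x. i < j \<longrightarrow> \<bar>borel_term (m j) \<epsilon> j i x\<bar> \<le> (1/2) ^ j)"
    by (metis borel_term_small)
  then obtain \<epsilon> where \<epsilon>: "\<And>j. \<epsilon> j > 0" "\<And>i j x. i < j \<Longrightarrow> \<bar>borel_term (m j) (\<epsilon> j) j i x\<bar> \<le> (1/2) ^ j"
    by metis
  define T where "T i j = borel_term (m j) (\<epsilon> j) j i" for i j
  have \<epsilon>_nz: "\<epsilon> j \<noteq> 0" for j
    using \<epsilon>(1)[of j] by simp
  then have "((\<lambda>x. \<Sum>j. T i j x) has_real_derivative (\<Sum>j. T (Suc i) j x)) (at x)" for i x
    using \<epsilon>(2) by (intro series_has_derivative_tower) (auto simp: T_def borel_term_has_derivative)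
  moreover have "(\<Sum>j. T i j 0) = m i" for i
  proof -
    have "T i j 0 = (if j = i then m i else 0)" for j
      by (auto simp: T_def borel_term_at_0 \<epsilon>_nz)
    then show ?thesis
      using sums_single[of i "\<lambda>_. m i"] by (simp add: sums_iff)
  qed
  ultimately show ?thesis
    using that[of "\<lambda>i x. \<Sum>j. T i j x"] by blast
qed

lemma borel_lemma:
  fixes m :: "nat \<Rightarrow> 'a::euclidean_space"
  obtains H where "\<And>i x. (H i has_vector_derivative H (Suc i) x) (at x)" "\<And>i. H i 0 = m i"
proof -
  have "\<forall>b. \<exists>H. (\<forall>i x. (H i has_real_derivative H (Suc i) x) (at x)) \<and> (\<forall>i. H i 0 = inner (m i) b)"
  proof
    fix b
    show "\<exists>H. (\<forall>i x. (H i has_real_derivative H (Suc i) x) (at x)) \<and> (\<forall>i. H i 0 = inner (m i) b)"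
      by (rule borel_lemma_real[of "\<lambda>i. inner (m i) b"]) blast
  qed
  then obtain Hb where Hb: "\<And>b i x. (Hb b i has_real_derivative Hb b (Suc i) x) (at x)"
    "\<And>b i. Hb b i 0 = inner (m i) b"
    by metis
  define H where "H i x = (\<Sum>b\<in>Basis. Hb b i x *\<^sub>R b)" for i x
  have "(H i has_vector_derivative H (Suc i) x) (at x)" for i x
    unfolding H_def[abs_def]
    by (intro has_vector_derivative_sum has_vector_derivative_scaleR[of _ _ _ _ "\<lambda>_. _" 0, simplified]
        Hb derivative_intros)
  moreover have "H i 0 = m i" for i
    by (simp add: H_def Hb(2) euclidean_representation)
  ultimately show ?thesis using that by blast
qed

section \<open>Extension from a compact interval\<close>

lemma vderiv_tower_on_shifted:
  assumes "\<And>i y. (H i has_vector_derivative H (Suc i) y) (at y)"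
    and "\<And>i x. x \<in> P \<Longrightarrow> D i x = H i (x - p)"
  shows "vderiv_tower_on k P D"
proof -
  have "(D i has_vector_derivative D (Suc i) x) (at x within P)" if "x \<in> P" for i x
  proof -
    have "((\<lambda>x. x - p) has_vector_derivative 1) (at x)"
      by (auto intro!: derivative_eq_intros)
    from vector_diff_chain_at[OF this assms(1)]
    have "((\<lambda>x. H i (x - p)) has_vector_derivative H (Suc i) (x - p)) (at x within P)"
      by (simp add: o_def has_vector_derivative_at_within)
    then show ?thesis
      using has_vector_derivative_transform[OF that assms(2)] assms(2)[OF that] by simp
  qed
  then show ?thesis
    by (auto simp: vderiv_tower_on_def intro: continuous_on_vector_derivative)
qed

lemma Ck_on_interval_extension:
  fixes c :: "real \<Rightarrow> 'a::euclidean_space"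
  assumes "a < b"
  obtains E where "\<And>t. t \<in> {a..b} \<Longrightarrow> E t = c t" "\<And>k. Ck_on k {a..b} c \<Longrightarrow> Ck_on k UNIV E"
proof -
  let ?S = "{a..b}"
  let ?d = "\<lambda>i. higher_vderiv ?S i c"
  obtain HL where HL: "\<And>i x. (HL i has_vector_derivative HL (Suc i) x) (at x)" "\<And>i. HL i 0 = ?d i a"
    using borel_lemma[of "\<lambda>i. ?d i a"] by blast
  obtain HR where HR: "\<And>i x. (HR i has_vector_derivative HR (Suc i) x) (at x)" "\<And>i. HR i 0 = ?d i b"
    using borel_lemma[of "\<lambda>i. ?d i b"] by blast
  define D where "D i x = (if x < a then HL i (x - a) else if x \<le> b then ?d i x else HR i (x - b))" for i x
  have "Ck_on k UNIV (D 0)" if "Ck_on k ?S c" for k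
  proof -
    have "vderiv_tower_on k {..a} D"
      by (rule vderiv_tower_on_shifted[where H=HL and p=a, OF HL(1)]) (use HL(2) assms in \<open>auto simp: D_def\<close>)
    moreover have "vderiv_tower_on k {b..} D"
      by (rule vderiv_tower_on_shifted[where H=HR and p=b, OF HR(1)]) (use HR(2) assms in \<open>auto simp: D_def\<close>)
    moreover have "vderiv_tower_on k ?S D"
      using assms by (intro vderiv_tower_on_cong[OF _ Ck_on_higher_vderiv[OF _ that]])
        (auto simp: D_def trivial_limit_within)
    ultimately have "vderiv_tower_on k ({..a} \<union> ?S \<union> {b..}) D"
      by (intro vderiv_tower_on_closed_Un closed_Un) auto
    moreover have "{..a} \<union> ?S \<union> {b..} = UNIV"
      by auto
    ultimately show ?thesis
      by (simp add: Ck_on_of_vderiv_tower_on)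
  qed
  moreover have "D 0 t = c t" if "t \<in> ?S" for t
    using that by (simp add: D_def)
  ultimately show ?thesis using that by blast
qed

lemma arc_Cs_extension:
  fixes L :: "'a::euclidean_space set"
  assumes "arc_Cs s L" "1 \<le> s"
  obtains a b and E E' :: "real \<Rightarrow> 'a" where "a < b" "L = E ` {a..b}" "inj_on E {a..b}" "Cs_on s UNIV E"
    "\<And>t. (E has_vector_derivative E' t) (at t)" "continuous_on UNIV E'" "\<And>t. t \<in> {a..b} \<Longrightarrow> E' t \<noteq> 0"
proof -
  obtain a b and c :: "real \<Rightarrow> 'a" where "a < b" "Cs_on s {a..b} c" "inj_on c {a..b}" "L = c ` {a..b}"
    and c': "\<And>t. t \<in> {a..b} \<Longrightarrow> vector_derivative c (at t within {a..b}) \<noteq> 0"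
    using assms(1) unfolding arc_Cs_def by blast
  obtain E where Ec: "\<And>t. t \<in> {a..b} \<Longrightarrow> E t = c t" and Ck: "\<And>k. Ck_on k {a..b} c \<Longrightarrow> Ck_on k UNIV E"
    using Ck_on_interval_extension[OF \<open>a < b\<close>] by blast
  have "Cs_on s UNIV E"
    using \<open>Cs_on s {a..b} c\<close> Ck by (simp add: Cs_on_iff_Ck_on)
  moreover have "enat (Suc 0) \<le> s"
    using assms(2) by (simp add: one_enat_def)
  ultimately have "Ck_on (Suc 0) UNIV E"
    unfolding Cs_on_iff_Ck_on by blast
  then obtain E' where E': "\<And>t. (E has_vector_derivative E' t) (at t)" "Ck_on 0 UNIV E'"
    by (rule Ck_on_SucE) blast
  then have "continuous_on UNIV E'"
    by simp
  have "E' t \<noteq> 0" if "t \<in> {a..b}" for t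
  proof -
    have "(c has_vector_derivative E' t) (at t within {a..b})"
      by (rule has_vector_derivative_transform[OF that _ has_vector_derivative_at_within[OF E'(1)]])
        (simp add: Ec)
    then show ?thesis
      using c'[OF that] vector_derivative_within_cbox[of a b t c] \<open>a < b\<close> that by auto
  qed
  moreover have "L = E ` {a..b}" "inj_on E {a..b}"
    using \<open>L = c ` {a..b}\<close> \<open>inj_on c {a..b}\<close> Ec by (auto simp: inj_on_def)
  ultimately show thesis
    using that \<open>a < b\<close> \<open>Cs_on s UNIV E\<close> E'(1) \<open>continuous_on UNIV E'\<close> by blast
qed

section \<open>A smooth field nowhere parallel to a curve\<close>

definition indep_pair :: "'a::real_vector \<Rightarrow> 'a \<Rightarrow> bool" where
  "indep_pair p q \<longleftrightarrow> (\<forall>\<alpha> \<beta>. \<alpha> *\<^sub>R p + \<beta> *\<^sub>R q = 0 \<longrightarrow> \<alpha> = 0 \<and> \<beta> = 0)"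

lemma indep_pair_scaleR_left: "c \<noteq> 0 \<Longrightarrow> indep_pair (c *\<^sub>R p) q \<longleftrightarrow> indep_pair p q"
  unfolding indep_pair_def
proof (intro iffI allI impI)
  fix \<alpha> \<beta>
  assume "c \<noteq> 0" and indep: "\<forall>\<alpha> \<beta>. \<alpha> *\<^sub>R c *\<^sub>R p + \<beta> *\<^sub>R q = 0 \<longrightarrow> \<alpha> = 0 \<and> \<beta> = 0"
    and "\<alpha> *\<^sub>R p + \<beta> *\<^sub>R q = 0"
  then have "(\<alpha> / c) *\<^sub>R c *\<^sub>R p + \<beta> *\<^sub>R q = 0"
    by simp
  then have "\<alpha> / c = 0 \<and> \<beta> = 0"
    using indep by blast
  then show "\<alpha> = 0 \<and> \<beta> = 0"
    using \<open>c \<noteq> 0\<close> by simp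
next
  fix \<alpha> \<beta>
  assume "c \<noteq> 0" and indep: "\<forall>\<alpha> \<beta>. \<alpha> *\<^sub>R p + \<beta> *\<^sub>R q = 0 \<longrightarrow> \<alpha> = 0 \<and> \<beta> = 0"
    and "\<alpha> *\<^sub>R c *\<^sub>R p + \<beta> *\<^sub>R q = 0"
  then have "(\<alpha> * c) *\<^sub>R p + \<beta> *\<^sub>R q = 0"
    by simp
  then have "\<alpha> * c = 0 \<and> \<beta> = 0"
    using indep by blast
  then show "\<alpha> = 0 \<and> \<beta> = 0"
    using \<open>c \<noteq> 0\<close> by simp
qed

lemma exists_unit_orthogonal:
  fixes e :: "'a::euclidean_space"
  assumes "2 \<le> DIM('a)"
  obtains w where "norm w = 1" "inner w e = 0"
proof -
  obtain y where "y \<noteq> 0" "orthogonal e y"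
    using orthogonal_to_vector_exists[OF assms] by blast
  then show thesis
    by (intro that[of "y /\<^sub>R norm y"]) (auto simp: orthogonal_def inner_commute)
qed

lemma normalized_projection_step:
  fixes w e e' :: "'a::real_inner"
  assumes w: "norm w = 1" "inner w e = 0" and e': "norm e' = 1" "norm (e' - e) \<le> 1/4"
  defines "p \<equiv> w - inner w e' *\<^sub>R e'"
  shows "norm (p /\<^sub>R norm p) = 1" "inner (p /\<^sub>R norm p) e' = 0" "inner w (p /\<^sub>R norm p) \<ge> 3/4"
proof -
  have "\<bar>inner w e'\<bar> = \<bar>inner w (e' - e)\<bar>"
    using w by (simp add: inner_diff_right)
  also have "\<dots> \<le> 1/4"
    using Cauchy_Schwarz_ineq2[of w "e' - e"] w e' by simp
  finally have "norm (inner w e' *\<^sub>R e') \<le> 1/4"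
    using e' by simp
  then have np: "norm p \<ge> 3/4"
    using norm_triangle_ineq2[of w "inner w e' *\<^sub>R e'"] w unfolding p_def by simp
  have pe': "inner p e' = 0"
    using e' by (simp add: p_def inner_diff_left power2_norm_eq_inner[symmetric])
  have "inner w p = inner p p"
    using pe' by (simp add: p_def inner_diff_left inner_diff_right inner_commute)
  moreover have pnz: "norm p \<noteq> 0"
    using np by linarith
  ultimately have "inner w (p /\<^sub>R norm p) = norm p"
    by (simp add: power2_norm_eq_inner[symmetric] power2_eq_square)
  then show "inner w (p /\<^sub>R norm p) \<ge> 3/4"
    using np by simp
  show "norm (p /\<^sub>R norm p) = 1" "inner (p /\<^sub>R norm p) e' = 0"
    using pnz pe' by auto
qed

lemma unit_normal_sequence:
  fixes e :: "nat \<Rightarrow> 'a::euclidean_space"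
  assumes "2 \<le> DIM('a)" "\<And>k. norm (e k) = 1" "\<And>k. norm (e (Suc k) - e k) \<le> 1/4"
  obtains w where "\<And>k. norm (w k) = 1" "\<And>k. inner (w k) (e k) = 0"
    "\<And>k. inner (w k) (w (Suc k)) \<ge> 3/4"
proof -
  obtain w0 where w0: "norm w0 = 1" "inner w0 (e 0) = 0"
    using exists_unit_orthogonal[OF assms(1)] by blast
  define next_normal where "next_normal v k = (let p = v - inner v (e k) *\<^sub>R e k in p /\<^sub>R norm p)" for v k
  define w where "w = rec_nat w0 (\<lambda>k v. next_normal v (Suc k))"
  have w_Suc: "w (Suc k) = next_normal (w k) (Suc k)" for k
    by (simp add: w_def)
  have unit_normal: "norm (w k) = 1 \<and> inner (w k) (e k) = 0" for k
  proof (induction k)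
    case (Suc k)
    then show ?case
      using normalized_projection_step(1,2)[of "w k" "e k" "e (Suc k)"] assms
      by (simp add: w_Suc next_normal_def Let_def)
  qed (simp add: w_def w0)
  moreover have "inner (w k) (w (Suc k)) \<ge> 3/4" for k
    using normalized_projection_step(3)[of "w k" "e k" "e (Suc k)"] unit_normal[of k] assms
    by (simp add: w_Suc next_normal_def Let_def)
  ultimately show thesis using that by blast
qed

lemma indep_pair_if_inner_bounds:
  fixes e u w :: "'a::real_inner"
  assumes "norm e = 1" "\<bar>inner w e\<bar> \<le> 1/4" "inner u w \<ge> 3/4" "\<bar>inner u e\<bar> \<le> 1/4"
  shows "indep_pair e u"
  unfolding indep_pair_def
proof (intro allI impI)
  fix \<alpha> \<beta> assume eq: "\<alpha> *\<^sub>R e + \<beta> *\<^sub>R u = 0"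
  have "\<beta> = 0"
  proof (rule ccontr)
    assume "\<beta> \<noteq> 0"
    have "\<beta> *\<^sub>R u = (- \<alpha>) *\<^sub>R e"
      using eq by (simp add: eq_neg_iff_add_eq_0 add.commute)
    then have "(1 / \<beta>) *\<^sub>R (\<beta> *\<^sub>R u) = (1 / \<beta>) *\<^sub>R ((- \<alpha>) *\<^sub>R e)"
      by simp
    then have u: "u = (- \<alpha> / \<beta>) *\<^sub>R e"
      using \<open>\<beta> \<noteq> 0\<close> by simp
    then have "\<bar>- \<alpha> / \<beta>\<bar> \<le> 1/4"
      using assms(1,4) by (simp add: power2_norm_eq_inner[symmetric])
    then have "\<bar>- \<alpha> / \<beta>\<bar> * \<bar>inner w e\<bar> \<le> 1/4 * (1/4)"
      using assms(2) by (intro mult_mono) auto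
    then have "\<bar>inner u w\<bar> \<le> 1/4 * (1/4)"
      unfolding u by (simp add: abs_mult inner_commute)
    with assms(3) show False
      by simp
  qed
  with eq assms(1) show "\<alpha> = 0 \<and> \<beta> = 0"
    by auto
qed

lemma indep_pair_of_near_normals:
  fixes e w0 w1 :: "'a::real_inner"
  assumes "norm e = 1" "norm w0 = 1" "inner w0 w1 \<ge> 3/4"
    and "\<bar>inner w0 e\<bar> \<le> 1/4" "\<bar>inner w1 e\<bar> \<le> 1/4" "0 \<le> \<sigma>" "\<sigma> \<le> 1"
  shows "indep_pair e ((1 - \<sigma>) *\<^sub>R w0 + \<sigma> *\<^sub>R w1)"
proof (rule indep_pair_if_inner_bounds[OF assms(1,4)])
  let ?u = "(1 - \<sigma>) *\<^sub>R w0 + \<sigma> *\<^sub>R w1"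
  have "inner w0 w0 = 1"
    using assms(2) by (simp add: power2_norm_eq_inner[symmetric])
  then have "inner ?u w0 = (1 - \<sigma>) + \<sigma> * inner w0 w1"
    by (simp add: inner_add_left inner_commute[of w1])
  then show "inner ?u w0 \<ge> 3/4"
    using assms(3,6,7) mult_left_mono[OF assms(3) assms(6)] by linarith
  have "inner ?u e = (1 - \<sigma>) * inner w0 e + \<sigma> * inner w1 e"
    by (simp add: inner_add_left)
  then have "\<bar>inner ?u e\<bar> \<le> \<bar>(1 - \<sigma>) * inner w0 e\<bar> + \<bar>\<sigma> * inner w1 e\<bar>"
    by (simp only: abs_triangle_ineq)
  also have "\<dots> = (1 - \<sigma>) * \<bar>inner w0 e\<bar> + \<sigma> * \<bar>inner w1 e\<bar>"
    using assms(6,7) by (simp add: abs_mult)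
  also have "\<dots> \<le> (1 - \<sigma>) * (1/4) + \<sigma> * (1/4)"
    using assms by (intro add_mono mult_left_mono) auto
  also have "\<dots> = 1/4"
    by (simp add: field_simps)
  finally show "\<bar>inner ?u e\<bar> \<le> 1/4" .
qed

(* Smoothed piecewise linear interpolation of the vectors w j placed at the points a + j * h. *)
definition grid_interpolation :: "real \<Rightarrow> real \<Rightarrow> nat \<Rightarrow> (nat \<Rightarrow> 'a::real_vector) \<Rightarrow> real \<Rightarrow> 'a" where
  "grid_interpolation a h N w t =
     (\<Sum>j\<le>Suc N. (smooth_step ((t - a) / h - real j + 1) - smooth_step ((t - a) / h - real j)) *\<^sub>R w j)"

lemma Ck_on_grid_interpolation: "Ck_on k UNIV (grid_interpolation a h N w)"
proof -
  have "Ck_on k UNIV (\<lambda>t. smooth_step ((t - a) / h - c + 1))"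
    "Ck_on k UNIV (\<lambda>t. smooth_step ((t - a) / h - c))" for c
    unfolding divide_inverse
    by (intro Ck_on_compose[OF Ck_on_smooth_step] Ck_on_add Ck_on_diff Ck_on_mult Ck_on_const Ck_on_id)+
  then show ?thesis
    unfolding grid_interpolation_def[abs_def]
    by (intro Ck_on_sum Ck_on_scaleR Ck_on_diff Ck_on_const) auto
qed

lemma grid_interpolation_eq_convex_combination:
  assumes "h > 0" "a \<le> t" "t \<le> a + real N * h"
  obtains k \<sigma> where "\<bar>t - (a + real k * h)\<bar> \<le> h" "\<bar>t - (a + real (Suc k) * h)\<bar> \<le> h"
    "0 \<le> \<sigma>" "\<sigma> \<le> 1" "grid_interpolation a h N w t = (1 - \<sigma>) *\<^sub>R w k + \<sigma> *\<^sub>R w (Suc k)"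
proof -
  define x where "x = (t - a) / h"
  define k where "k = nat \<lfloor>x\<rfloor>"
  have x: "0 \<le> x" "x \<le> real N"
    using assms by (auto simp: x_def field_simps)
  have k: "real k \<le> x" "x < real k + 1"
    using x(1) by (simp_all add: k_def)
  have kN: "k \<le> N"
    using k x(2) by linarith
  let ?\<psi> = "\<lambda>j. smooth_step (x - real j + 1) - smooth_step (x - real j)"
  have "?\<psi> j = 0" if "j \<noteq> k" "j \<noteq> Suc k" for j
  proof (cases "j < k")
    case True
    then have "real j + 1 \<le> x" using k by linarith
    then show ?thesis by (simp add: smooth_step_eq_1)
  next
    case False
    with that have "x \<le> real j - 1" using k by linarith
    then show ?thesis by (simp add: smooth_step_eq_0)
  qed
  then have "grid_interpolation a h N w t = (\<Sum>j\<in>{k, Suc k}. ?\<psi> j *\<^sub>R w j)"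
    unfolding grid_interpolation_def x_def[symmetric] using kN by (intro sum.mono_neutral_right) auto
  also have "\<dots> = (1 - smooth_step (x - real k)) *\<^sub>R w k + smooth_step (x - real k) *\<^sub>R w (Suc k)"
    using k by (simp add: smooth_step_eq_1 smooth_step_eq_0 algebra_simps)
  finally have "grid_interpolation a h N w t =
      (1 - smooth_step (x - real k)) *\<^sub>R w k + smooth_step (x - real k) *\<^sub>R w (Suc k)" .
  moreover have "\<bar>t - (a + real k * h)\<bar> \<le> h" "\<bar>t - (a + real (Suc k) * h)\<bar> \<le> h"
    using k assms(1) by (auto simp: x_def field_simps)
  ultimately show thesis
    using that smooth_step_bounds by blast
qed

lemma uniform_grid_step:
  fixes e :: "real \<Rightarrow> 'a::metric_space"
  assumes "a < b" "continuous_on {a..b} e" "\<epsilon> > 0"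
  obtains h N where "h > 0" "b = a + real N * h"
    "\<And>t t'. t \<in> {a..b} \<Longrightarrow> t' \<in> {a..b} \<Longrightarrow> \<bar>t - t'\<bar> \<le> h \<Longrightarrow> dist (e t) (e t') < \<epsilon>"
proof -
  obtain r where "r > 0" and r: "\<And>t t'. t \<in> {a..b} \<Longrightarrow> t' \<in> {a..b} \<Longrightarrow> dist t' t < r \<Longrightarrow> dist (e t') (e t) < \<epsilon>"
    using compact_uniformly_continuous[OF assms(2) compact_Icc] \<open>\<epsilon> > 0\<close>
    unfolding uniformly_continuous_on_def by metis
  obtain N :: nat where N: "(b - a) / r < N"
    using reals_Archimedean2 by blast
  have "0 < (b - a) / r"
    using assms(1) \<open>r > 0\<close> by simp
  then have "N > 0"
    using N by linarith
  then have "(b - a) / N > 0" "(b - a) / N < r" "b = a + real N * ((b - a) / N)"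
    using N assms(1) \<open>r > 0\<close> by (auto simp: field_simps)
  then show thesis
    using r by (intro that[of "(b - a) / N" N]) (auto simp: dist_real_def)
qed

lemma unit_field_grid_normals:
  fixes e :: "real \<Rightarrow> 'a::euclidean_space"
  assumes "a < b" "continuous_on {a..b} e" "\<And>t. t \<in> {a..b} \<Longrightarrow> norm (e t) = 1" "2 \<le> DIM('a)"
  obtains h N w where "h > 0" "b = a + real N * h" "\<And>k. norm (w k) = 1"
    "\<And>k. inner (w k) (w (Suc k)) \<ge> 3/4"
    "\<And>t k. t \<in> {a..b} \<Longrightarrow> \<bar>t - (a + real k * h)\<bar> \<le> h \<Longrightarrow> \<bar>inner (w k) (e t)\<bar> \<le> 1/4"
proof -
  obtain h N where "h > 0" "b = a + real N * h" and close:
    "\<And>t t'. t \<in> {a..b} \<Longrightarrow> t' \<in> {a..b} \<Longrightarrow> \<bar>t - t'\<bar> \<le> h \<Longrightarrow> norm (e t - e t') \<le> 1/4"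
    using uniform_grid_step[OF assms(1,2), of "1/4"]
    by (metis dist_norm less_eq_real_def zero_less_divide_1_iff zero_less_numeral)
  define tk where "tk k = min b (a + real k * h)" for k
  have tk: "tk k \<in> {a..b}" for k
    using assms(1) \<open>h > 0\<close> by (auto simp: tk_def)
  have "\<bar>tk (Suc k) - tk k\<bar> \<le> h" for k
    using \<open>h > 0\<close> by (auto simp: tk_def algebra_simps min_def)
  then obtain w where w: "\<And>k. norm (w k) = 1" "\<And>k. inner (w k) (e (tk k)) = 0"
    "\<And>k. inner (w k) (w (Suc k)) \<ge> 3/4"
    using unit_normal_sequence[OF assms(4), of "\<lambda>k. e (tk k)"] assms(3)[OF tk] close[OF tk tk] by metis
  have "\<bar>inner (w k) (e t)\<bar> \<le> 1/4" if "t \<in> {a..b}" "\<bar>t - (a + real k * h)\<bar> \<le> h" for t k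
  proof -
    have "\<bar>t - tk k\<bar> \<le> h"
      using that by (auto simp: tk_def min_def)
    have "\<bar>inner (w k) (e t)\<bar> = \<bar>inner (w k) (e t - e (tk k))\<bar>"
      using w(2) by (simp add: inner_diff_right)
    also have "\<dots> \<le> norm (w k) * norm (e t - e (tk k))"
      by (rule Cauchy_Schwarz_ineq2)
    finally show ?thesis
      using w(1) close[OF that(1) tk \<open>\<bar>t - tk k\<bar> \<le> h\<close>] by simp
  qed
  with \<open>h > 0\<close> \<open>b = a + real N * h\<close> w that show thesis by blast
qed

lemma smooth_normal_field:
  fixes e :: "real \<Rightarrow> 'a::euclidean_space"
  assumes "a < b" "continuous_on {a..b} e" "\<And>t. t \<in> {a..b} \<Longrightarrow> e t \<noteq> 0" "2 \<le> DIM('a)"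
  obtains u where "\<And>k. Ck_on k UNIV u" "\<And>t. t \<in> {a..b} \<Longrightarrow> indep_pair (e t) (u t)"
proof -
  define eh where "eh t = e t /\<^sub>R norm (e t)" for t
  have eh_unit: "norm (eh t) = 1" if "t \<in> {a..b}" for t
    using assms(3)[OF that] by (simp add: eh_def)
  have eh_cont: "continuous_on {a..b} eh"
    unfolding eh_def using assms(2,3) by (intro continuous_intros) auto
  obtain h N w where hN: "h > 0" "b = a + real N * h" and w: "\<And>k. norm (w k) = 1"
    "\<And>k. inner (w k) (w (Suc k)) \<ge> 3/4"
    "\<And>t k. t \<in> {a..b} \<Longrightarrow> \<bar>t - (a + real k * h)\<bar> \<le> h \<Longrightarrow> \<bar>inner (w k) (eh t)\<bar> \<le> 1/4"
    using unit_field_grid_normals[OF assms(1) eh_cont eh_unit assms(4)] by blast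
  have "indep_pair (e t) (grid_interpolation a h N w t)" if t: "t \<in> {a..b}" for t
  proof -
    obtain k \<sigma> where k: "\<bar>t - (a + real k * h)\<bar> \<le> h" "\<bar>t - (a + real (Suc k) * h)\<bar> \<le> h"
      and \<sigma>: "0 \<le> \<sigma>" "\<sigma> \<le> 1"
      and u: "grid_interpolation a h N w t = (1 - \<sigma>) *\<^sub>R w k + \<sigma> *\<^sub>R w (Suc k)"
      using grid_interpolation_eq_convex_combination[OF hN(1), where t=t and N=N and w=w] hN t by auto
    have "indep_pair (eh t) (grid_interpolation a h N w t)"
      unfolding u by (intro indep_pair_of_near_normals eh_unit t w \<sigma> k)
    then show ?thesis
      using assms(3)[OF t] indep_pair_scaleR_left[of "inverse (norm (e t))" "e t"]
      by (simp add: eh_def)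
  qed
  with Ck_on_grid_interpolation that show thesis by blast
qed

section \<open>The tube map near a segment\<close>

lemma indep_pair_iff_inner_strict:
  fixes p q :: "'a::real_inner"
  shows "indep_pair p q \<longleftrightarrow> (inner p q)\<^sup>2 < inner p p * inner q q"
proof
  assume indep: "indep_pair p q"
  have "q \<noteq> 0"
    using indep[unfolded indep_pair_def, rule_format, of 0 1] by auto
  define v where "v = inner q q *\<^sub>R p - inner p q *\<^sub>R q"
  have "v \<noteq> 0"
    using indep \<open>q \<noteq> 0\<close> unfolding indep_pair_def v_def
    by (metis add_uminus_conv_diff inner_eq_zero_iff scaleR_minus_left)
  then have "0 < inner v v" by simp
  also have "inner v v = inner q q * (inner p p * inner q q - (inner p q)\<^sup>2)"
    by (simp add: v_def inner_diff_left inner_diff_right inner_commute algebra_simps power2_eq_square)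
  finally show "(inner p q)\<^sup>2 < inner p p * inner q q"
    using inner_ge_zero[of q] by (auto simp: zero_less_mult_iff)
next
  assume strict: "(inner p q)\<^sup>2 < inner p p * inner q q"
  show "indep_pair p q"
    unfolding indep_pair_def
  proof (intro allI impI)
    fix \<alpha> \<beta> assume eq: "\<alpha> *\<^sub>R p + \<beta> *\<^sub>R q = 0"
    show "\<alpha> = 0 \<and> \<beta> = 0"
    proof (cases "\<alpha> = 0")
      case True
      then show ?thesis using eq strict by auto
    next
      case False
      have "\<alpha> *\<^sub>R p = (- \<beta>) *\<^sub>R q"
        using eq by (simp add: eq_neg_iff_add_eq_0)
      then have "(1 / \<alpha>) *\<^sub>R (\<alpha> *\<^sub>R p) = (1 / \<alpha>) *\<^sub>R ((- \<beta>) *\<^sub>R q)"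
        by simp
      then have "p = (- \<beta> / \<alpha>) *\<^sub>R q"
        using False by simp
      with strict show ?thesis
        by (simp add: power2_eq_square algebra_simps)
    qed
  qed
qed

lemma open_Collect_indep_pair:
  fixes P Q :: "'b::topological_space \<Rightarrow> 'a::real_inner"
  assumes "continuous_on UNIV P" "continuous_on UNIV Q"
  shows "open {z. indep_pair (P z) (Q z)}"
  unfolding indep_pair_iff_inner_strict
  using assms by (intro open_Collect_less continuous_intros) auto

lemma onorm_plane_map_le:
  fixes p q :: "'a::real_normed_vector"
  shows "onorm (\<lambda>v::real \<times> real. fst v *\<^sub>R p + snd v *\<^sub>R q) \<le> norm p + norm q"
proof (rule onorm_le)
  fix v :: "real \<times> real"
  have "norm (fst v *\<^sub>R p + snd v *\<^sub>R q) \<le> \<bar>fst v\<bar> * norm p + \<bar>snd v\<bar> * norm q"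
    by (rule order_trans[OF norm_triangle_ineq]) simp
  also have "\<dots> \<le> norm v * norm p + norm v * norm q"
    using norm_fst_le[of "fst v" "snd v"] norm_snd_le[where x="fst v" and y="snd v"]
    by (intro add_mono mult_right_mono) auto
  finally show "norm (fst v *\<^sub>R p + snd v *\<^sub>R q) \<le> (norm p + norm q) * norm v"
    by (simp add: algebra_simps)
qed

lemma inj_plane_map: "indep_pair p q \<Longrightarrow> inj (\<lambda>v::real \<times> real. fst v *\<^sub>R p + snd v *\<^sub>R q)"
proof (rule injI)
  fix v w :: "real \<times> real"
  assume indep: "indep_pair p q" and "fst v *\<^sub>R p + snd v *\<^sub>R q = fst w *\<^sub>R p + snd w *\<^sub>R q"
  then have "(fst v - fst w) *\<^sub>R p + (snd v - snd w) *\<^sub>R q = 0"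
    by (simp add: algebra_simps)
  with indep have "fst v - fst w = 0 \<and> snd v - snd w = 0"
    unfolding indep_pair_def by blast
  then show "v = w"
    by (simp add: prod_eq_iff)
qed

lemma locally_injective_plane_map:
  fixes F :: "real \<times> real \<Rightarrow> 'a::euclidean_space"
  assumes deriv: "\<And>z. (F has_derivative (\<lambda>v. fst v *\<^sub>R P z + snd v *\<^sub>R Q z)) (at z)"
    and P: "continuous_on UNIV P" and Q: "continuous_on UNIV Q" and "indep_pair (P z0) (Q z0)"
  obtains r where "r > 0" "inj_on F (ball z0 r)"
proof -
  let ?L = "\<lambda>z v. fst v *\<^sub>R P z + snd v *\<^sub>R Q z"
  have "linear (?L z0)"
    by (intro linearI) (auto simp: algebra_simps)
  then obtain g where "linear g" "g \<circ> ?L z0 = id"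
    using linear_injective_left_inverse inj_plane_map[OF \<open>indep_pair (P z0) (Q z0)\<close>] by blast
  have onorm_cont: "\<exists>d>0. \<forall>z. dist z0 z < d \<longrightarrow> onorm (\<lambda>v. ?L z v - ?L z0 v) < e" if "e > 0" for e
  proof -
    have "isCont (\<lambda>z. norm (P z - P z0) + norm (Q z - Q z0)) z0"
      using continuous_on_interior[OF P, of z0] continuous_on_interior[OF Q, of z0]
      by (intro continuous_intros) auto
    then obtain d where "d > 0" and d: "\<And>z. dist z z0 < d \<Longrightarrow> norm (P z - P z0) + norm (Q z - Q z0) < e"
      using \<open>e > 0\<close> unfolding continuous_at_eps_delta by force
    have "(\<lambda>v. ?L z v - ?L z0 v) = (\<lambda>v. fst v *\<^sub>R (P z - P z0) + snd v *\<^sub>R (Q z - Q z0))" for z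
      by (simp add: fun_eq_iff algebra_simps)
    then have "onorm (\<lambda>v. ?L z v - ?L z0 v) < e" if "dist z0 z < d" for z
      using onorm_plane_map_le[of "P z - P z0" "Q z - Q z0"] d[of z] that by (simp add: dist_commute)
    with \<open>d > 0\<close> show ?thesis by blast
  qed
  show thesis
  proof (rule has_derivative_locally_injective[of z0 UNIV g "\<lambda>z. ?L z" F])
    show "bounded_linear g"
      using \<open>linear g\<close> by (simp add: linear_conv_bounded_linear)
    show "(F has_derivative ?L z) (at z)" if "z \<in> UNIV" for z
      by (rule deriv)
  qed (use \<open>g \<circ> ?L z0 = id\<close> onorm_cont that in auto)
qed

lemma LIMSEQ_subseq_of_close:
  fixes x y :: "nat \<Rightarrow> 'a::real_normed_vector"
  assumes "(\<lambda>n. x (\<phi> n)) \<longlonglongrightarrow> l" "strict_mono \<phi>" "\<And>n. dist (x n) (y n) < 1 / real (Suc n)"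
  shows "(\<lambda>n. y (\<phi> n)) \<longlonglongrightarrow> l"
proof (rule Lim_transform[OF assms(1)])
  have "(\<lambda>n. y n - x n) \<longlonglongrightarrow> 0"
    using assms(3) by (intro LIMSEQ_norm_0) (simp add: dist_norm norm_minus_commute)
  from LIMSEQ_subseq_LIMSEQ[OF this assms(2)]
  show "(\<lambda>n. y (\<phi> n) - x (\<phi> n)) \<longlonglongrightarrow> 0"
    by (simp add: o_def)
qed

lemma convergent_subseq_near_compact:
  fixes y z :: "nat \<Rightarrow> 'a::real_normed_vector"
  assumes "compact K" and y: "\<And>n. y n \<in> (\<Union>x\<in>K. ball x (1 / real (Suc n)))"
    and z: "\<And>n. z n \<in> (\<Union>x\<in>K. ball x (1 / real (Suc n)))"
  obtains \<phi> p q where "strict_mono \<phi>" "p \<in> K" "q \<in> K" "(\<lambda>n. y (\<phi> n)) \<longlonglongrightarrow> p" "(\<lambda>n. z (\<phi> n)) \<longlonglongrightarrow> q"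
proof -
  have "\<forall>n. \<exists>k. k \<in> K \<and> dist k (y n) < 1 / real (Suc n)"
    using y by (simp del: of_nat_Suc) blast
  then obtain ky where ky: "\<And>n. ky n \<in> K" "\<And>n. dist (ky n) (y n) < 1 / real (Suc n)"
    by metis
  have "\<forall>n. \<exists>k. k \<in> K \<and> dist k (z n) < 1 / real (Suc n)"
    using z by (simp del: of_nat_Suc) blast
  then obtain kz where kz: "\<And>n. kz n \<in> K" "\<And>n. dist (kz n) (z n) < 1 / real (Suc n)"
    by metis
  have "\<forall>n. (ky n, kz n) \<in> K \<times> K"
    using ky kz by simp
  from seq_compactE[OF compact_imp_seq_compact[OF compact_Times[OF \<open>compact K\<close> \<open>compact K\<close>]] this]
  obtain pq \<phi> where "pq \<in> K \<times> K" "strict_mono \<phi>" and lim: "((\<lambda>n. (ky n, kz n)) \<circ> \<phi>) \<longlonglongrightarrow> pq"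
    by blast
  obtain p q where pq: "pq = (p, q)" "p \<in> K" "q \<in> K"
    using \<open>pq \<in> K \<times> K\<close> by blast
  have "(\<lambda>n. y (\<phi> n)) \<longlonglongrightarrow> p"
    by (rule LIMSEQ_subseq_of_close[OF _ \<open>strict_mono \<phi>\<close> ky(2)])
      (use tendsto_fst[OF lim] pq(1) in \<open>simp add: o_def\<close>)
  moreover have "(\<lambda>n. z (\<phi> n)) \<longlonglongrightarrow> q"
    by (rule LIMSEQ_subseq_of_close[OF _ \<open>strict_mono \<phi>\<close> kz(2)])
      (use tendsto_snd[OF lim] pq(1) in \<open>simp add: o_def\<close>)
  ultimately show thesis
    using that \<open>strict_mono \<phi>\<close> pq(2,3) by blast
qed

lemma inj_on_ball_neighbourhood_of_compact:
  fixes F :: "'a::real_normed_vector \<Rightarrow> 'b::metric_space"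
  assumes "compact K" and F: "continuous_on UNIV F" and "inj_on F K"
    and loc: "\<And>x. x \<in> K \<Longrightarrow> \<exists>r>0. inj_on F (ball x r)"
  obtains \<delta> where "\<delta> > 0" "inj_on F (\<Union>x\<in>K. ball x \<delta>)"
proof (rule ccontr)
  assume "\<not> thesis"
  then have "\<not> inj_on F (\<Union>x\<in>K. ball x (1 / real (Suc n)))" for n
    using that[of "1 / real (Suc n)"] by auto
  then have "\<forall>n. \<exists>y z. y \<in> (\<Union>x\<in>K. ball x (1 / real (Suc n))) \<and> z \<in> (\<Union>x\<in>K. ball x (1 / real (Suc n)))
      \<and> y \<noteq> z \<and> F y = F z"
    unfolding inj_on_def by blast
  then obtain y z where yz: "\<And>n. y n \<in> (\<Union>x\<in>K. ball x (1 / real (Suc n)))"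
    "\<And>n. z n \<in> (\<Union>x\<in>K. ball x (1 / real (Suc n)))" "\<And>n. y n \<noteq> z n" "\<And>n. F (y n) = F (z n)"
    by metis
  obtain \<phi> p q where "p \<in> K" "q \<in> K" and yp: "(\<lambda>n. y (\<phi> n)) \<longlonglongrightarrow> p" and zq: "(\<lambda>n. z (\<phi> n)) \<longlonglongrightarrow> q"
    using convergent_subseq_near_compact[OF \<open>compact K\<close> yz(1,2)] by blast
  have "(\<lambda>n. F (y (\<phi> n))) \<longlonglongrightarrow> F p"
    using continuous_on_tendsto_compose[OF F yp] by simp
  moreover have "(\<lambda>n. F (y (\<phi> n))) \<longlonglongrightarrow> F q"
    using continuous_on_tendsto_compose[OF F zq] yz(4) by simp
  ultimately have "F p = F q"
    by (rule LIMSEQ_unique)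
  then have "p = q"
    using inj_onD[OF \<open>inj_on F K\<close> _ \<open>p \<in> K\<close> \<open>q \<in> K\<close>] by blast
  obtain r where "r > 0" "inj_on F (ball p r)"
    using loc[OF \<open>p \<in> K\<close>] by blast
  have "\<forall>\<^sub>F n in sequentially. y (\<phi> n) \<in> ball p r"
    using tendstoD[OF yp \<open>r > 0\<close>] by (simp add: dist_commute)
  moreover have "\<forall>\<^sub>F n in sequentially. z (\<phi> n) \<in> ball p r"
    using tendstoD[OF zq \<open>r > 0\<close>] \<open>p = q\<close> by (simp add: dist_commute)
  ultimately obtain n where "y (\<phi> n) \<in> ball p r" "z (\<phi> n) \<in> ball p r"
    using eventually_happens'[OF sequentially_bot eventually_conj] by blast
  then show False
    using inj_onD[OF \<open>inj_on F (ball p r)\<close> yz(4)] yz(3) by blast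
qed

lemma segment_strip_subset_open:
  fixes a b :: real
  assumes "a \<le> b" "open W" "{a..b} \<times> {0} \<subseteq> W"
  obtains d where "d > 0" "{a - d..b + d} \<times> {-d..d} \<subseteq> W"
proof -
  obtain \<epsilon> where "\<epsilon> > 0" and \<epsilon>: "(\<Union>x\<in>{a..b} \<times> {0}. ball x \<epsilon>) \<subseteq> W"
    using compact_subset_open_imp_ball_epsilon_subset[OF compact_Times[OF compact_Icc compact_sing]
        assms(2,3)]
    by blast
  have "(t, \<sigma>) \<in> W" if "t \<in> {a - \<epsilon>/3..b + \<epsilon>/3}" "\<sigma> \<in> {-\<epsilon>/3..\<epsilon>/3}" for t \<sigma>
  proof -
    define t' where "t' = max a (min b t)"
    have "dist (t', 0) (t, \<sigma>) \<le> \<bar>t' - t\<bar> + \<bar>\<sigma>\<bar>"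
      using sqrt_sum_squares_le_sum_abs[of "t' - t" "0 - \<sigma>"] by (simp add: dist_Pair_Pair dist_real_def)
    also have "\<dots> < \<epsilon>"
      using that \<open>\<epsilon> > 0\<close> by (auto simp: t'_def)
    finally show ?thesis
      using \<epsilon> assms(1) by (force simp: t'_def)
  qed
  with \<open>\<epsilon> > 0\<close> show thesis
    by (intro that[of "\<epsilon>/3"]) auto
qed

definition tube_map :: "(real \<Rightarrow> 'a::real_vector) \<Rightarrow> (real \<Rightarrow> 'a) \<Rightarrow> real \<times> real \<Rightarrow> 'a" where
  "tube_map E u z = E (fst z) + snd z *\<^sub>R u (fst z)"

lemma tube_map_has_derivative:
  assumes "(E has_vector_derivative E') (at t)" "(u has_vector_derivative u') (at t)"
  shows "(tube_map E u has_derivative (\<lambda>v. fst v *\<^sub>R (E' + \<sigma> *\<^sub>R u') + snd v *\<^sub>R u t)) (at (t, \<sigma>))"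
proof -
  have fst: "(fst has_derivative fst) (at (t, \<sigma>))"
    by (rule has_derivative_fst[OF has_derivative_ident])
  have "(E has_derivative (\<lambda>h. h *\<^sub>R E')) (at (fst (t, \<sigma>)))"
    "(u has_derivative (\<lambda>h. h *\<^sub>R u')) (at (fst (t, \<sigma>)))"
    using assms by (simp_all add: has_vector_derivative_def)
  note E = has_derivative_compose[OF fst this(1)] and u = has_derivative_compose[OF fst this(2)]
  have "((\<lambda>z. snd z *\<^sub>R u (fst z)) has_derivative
      (\<lambda>v. \<sigma> *\<^sub>R (fst v *\<^sub>R u') + snd v *\<^sub>R u t)) (at (t, \<sigma>))"
    using has_derivative_scaleR[OF has_derivative_snd[OF has_derivative_ident] u] by simp
  with E
  show ?thesis
    unfolding tube_map_def[abs_def]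
    by (rule has_derivative_eq_rhs[OF has_derivative_add]) (auto simp: algebra_simps)
qed

lemma continuous_on_tube_map:
  assumes "\<And>t. (E has_vector_derivative E' t) (at t)" "\<And>t. (u has_vector_derivative u' t) (at t)"
  shows "continuous_on UNIV (tube_map E u)"
proof -
  have "isCont (tube_map E u) z" for z
    by (cases z) (simp add: has_derivative_continuous[OF tube_map_has_derivative[OF assms]])
  then show ?thesis
    by (simp add: continuous_at_imp_continuous_on)
qed

lemma tube_map_locally_injective:
  fixes E u :: "real \<Rightarrow> 'a::euclidean_space"
  assumes E: "\<And>t. (E has_vector_derivative E' t) (at t)" "continuous_on UNIV E'"
    and u: "\<And>t. (u has_vector_derivative u' t) (at t)" "continuous_on UNIV u'"
    and "indep_pair (E' t + \<sigma> *\<^sub>R u' t) (u t)"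
  shows "\<exists>r>0. inj_on (tube_map E u) (ball (t, \<sigma>) r)"
proof (rule locally_injective_plane_map
    [where P="\<lambda>z. E' (fst z) + snd z *\<^sub>R u' (fst z)" and Q="\<lambda>z. u (fst z)"])
  show "(tube_map E u has_derivative
      (\<lambda>v. fst v *\<^sub>R (E' (fst z) + snd z *\<^sub>R u' (fst z)) + snd v *\<^sub>R u (fst z))) (at z)"
    for z :: "real \<times> real"
    using tube_map_has_derivative[OF E(1) u(1)] by (cases z) simp
  have "continuous_on UNIV u"
    using u(1) by (auto intro: continuous_on_vector_derivative has_vector_derivative_at_within)
  then show "continuous_on UNIV (\<lambda>z::real \<times> real. E' (fst z) + snd z *\<^sub>R u' (fst z))"
    "continuous_on UNIV (\<lambda>z::real \<times> real. u (fst z))"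
    using E(2) u(2)
    by (auto intro!: continuous_intros intro: continuous_on_compose2[OF _ continuous_on_fst[OF continuous_on_id]])
qed (use assms(5) in auto)

lemma tube_map_injective_near_segment:
  fixes E u :: "real \<Rightarrow> 'a::euclidean_space"
  assumes E: "\<And>t. (E has_vector_derivative E' t) (at t)" "continuous_on UNIV E'"
    and u: "\<And>t. (u has_vector_derivative u' t) (at t)" "continuous_on UNIV u'"
    and "inj_on E {a..b}" and indep: "\<And>t. t \<in> {a..b} \<Longrightarrow> indep_pair (E' t) (u t)"
  obtains W where "open W" "{a..b} \<times> {0} \<subseteq> W" "inj_on (tube_map E u) W"
    "\<And>t \<sigma>. (t, \<sigma>) \<in> W \<Longrightarrow> indep_pair (E' t + \<sigma> *\<^sub>R u' t) (u t)"
proof -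
  let ?K = "{a..b} \<times> {0::real}"
  have "inj_on (tube_map E u) ?K"
    using \<open>inj_on E {a..b}\<close> by (auto simp: inj_on_def tube_map_def)
  moreover have "\<exists>r>0. inj_on (tube_map E u) (ball z r)" if z: "z \<in> ?K" for z
  proof -
    obtain t where "z = (t, 0)" "t \<in> {a..b}"
      using z by blast
    then show ?thesis
      using tube_map_locally_injective[OF E u, of t 0] indep by simp
  qed
  ultimately obtain \<delta> where "\<delta> > 0" and inj: "inj_on (tube_map E u) (\<Union>z\<in>?K. ball z \<delta>)"
    using inj_on_ball_neighbourhood_of_compact[OF compact_Times[OF compact_Icc compact_sing]
        continuous_on_tube_map[OF E(1) u(1)]] by blast
  have "continuous_on UNIV u"
    using u(1) by (auto intro: continuous_on_vector_derivative has_vector_derivative_at_within)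
  then have "open {z. indep_pair (E' (fst z) + snd z *\<^sub>R u' (fst z)) (u (fst z))}"
    using E(2) u(2) by (intro open_Collect_indep_pair)
      (auto intro!: continuous_intros intro: continuous_on_compose2[OF _ continuous_on_fst[OF continuous_on_id]])
  then show thesis
    using \<open>\<delta> > 0\<close> indep inj_on_subset[OF inj]
    by (intro that[of "(\<Union>z\<in>?K. ball z \<delta>) \<inter> {z. indep_pair (E' (fst z) + snd z *\<^sub>R u' (fst z)) (u (fst z))}"])
      auto
qed

lemma tube_map_injective_strip:
  fixes E u :: "real \<Rightarrow> 'a::euclidean_space"
  assumes "a \<le> b"
    and E: "\<And>t. (E has_vector_derivative E' t) (at t)" "continuous_on UNIV E'"
    and u: "\<And>t. (u has_vector_derivative u' t) (at t)" "continuous_on UNIV u'"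
    and "inj_on E {a..b}" "\<And>t. t \<in> {a..b} \<Longrightarrow> indep_pair (E' t) (u t)"
    and "open \<Omega>" "E ` {a..b} \<subseteq> \<Omega>"
  obtains d where "d > 0" "inj_on (tube_map E u) ({a - d..b + d} \<times> {-d..d})"
    "\<And>t \<sigma>. t \<in> {a - d..b + d} \<Longrightarrow> \<sigma> \<in> {-d..d} \<Longrightarrow> indep_pair (E' t + \<sigma> *\<^sub>R u' t) (u t)"
    "tube_map E u ` ({a - d..b + d} \<times> {-d..d}) \<subseteq> \<Omega>"
proof -
  obtain W where "open W" "{a..b} \<times> {0} \<subseteq> W" and W: "inj_on (tube_map E u) W"
    "\<And>t \<sigma>. (t, \<sigma>) \<in> W \<Longrightarrow> indep_pair (E' t + \<sigma> *\<^sub>R u' t) (u t)"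
    using tube_map_injective_near_segment[OF E u assms(6,7)] by blast
  have "open (W \<inter> tube_map E u -` \<Omega>)"
    using \<open>open W\<close> open_vimage[OF \<open>open \<Omega>\<close> continuous_on_tube_map[OF E(1) u(1)]] by blast
  moreover have "{a..b} \<times> {0} \<subseteq> W \<inter> tube_map E u -` \<Omega>"
    using \<open>{a..b} \<times> {0} \<subseteq> W\<close> \<open>E ` {a..b} \<subseteq> \<Omega>\<close> by (auto simp: tube_map_def)
  ultimately obtain d where "d > 0" and strip: "{a - d..b + d} \<times> {-d..d} \<subseteq> W \<inter> tube_map E u -` \<Omega>"
    using segment_strip_subset_open[OF \<open>a \<le> b\<close>] by blast
  then show thesis
    using inj_on_subset[OF W(1)] W(2) by (intro that) blast+
qed

section \<open>A loop around a segment\<close>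

(* A circle of radius R around (m, 0), with the arc where sin (2 * pi * \<theta>) \<le> -\<kappa> flattened onto
   the axis by flat_exp. *)
definition segment_loop :: "real \<Rightarrow> real \<Rightarrow> real \<Rightarrow> real \<Rightarrow> real \<Rightarrow> real \<times> real" where
  "segment_loop m R d \<kappa> \<theta> = (m + R * cos (2 * pi * \<theta>), d * flat_exp (sin (2 * pi * \<theta>) + \<kappa>))"

lemma segment_loop_periodic: "segment_loop m R d \<kappa> (\<theta> + 1) = segment_loop m R d \<kappa> \<theta>"
  by (simp add: segment_loop_def distrib_left)

lemma Ck_on_segment_loop:
  "Ck_on k UNIV (\<lambda>\<theta>. fst (segment_loop m R d \<kappa> \<theta>))" "Ck_on k UNIV (\<lambda>\<theta>. snd (segment_loop m R d \<kappa> \<theta>))"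
  unfolding segment_loop_def fst_conv snd_conv
  by (intro Ck_on_add Ck_on_mult Ck_on_const Ck_on_cos Ck_on_sin Ck_on_compose[OF Ck_on_flat_exp])+

lemma segment_loop_bounds:
  assumes "R \<ge> 0" "d \<ge> 0"
  shows "segment_loop m R d \<kappa> \<theta> \<in> {m - R..m + R} \<times> {0..d}"
proof -
  have "\<bar>R * cos (2 * pi * \<theta>)\<bar> \<le> R"
    using assms(1) mult_left_le[OF abs_cos_le_one] by (simp add: abs_mult)
  moreover have "d * flat_exp (sin (2 * pi * \<theta>) + \<kappa>) \<le> d"
    using assms(2) mult_left_le[OF less_imp_le[OF flat_exp_less_1]] by blast
  ultimately show ?thesis
    using assms(2) flat_exp_nonneg by (auto simp: segment_loop_def abs_le_iff)
qed

lemma inj_on_segment_loop: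
  assumes "R \<noteq> 0" "d \<noteq> 0" "\<kappa> > 0"
  shows "inj_on (segment_loop m R d \<kappa>) {0..<1}"
proof (rule inj_onI)
  fix x y assume x: "x \<in> {0..<1}" and y: "y \<in> {0..<1}" and "segment_loop m R d \<kappa> x = segment_loop m R d \<kappa> y"
  then have cos: "cos (2 * pi * x) = cos (2 * pi * y)"
    and "flat_exp (sin (2 * pi * x) + \<kappa>) = flat_exp (sin (2 * pi * y) + \<kappa>)"
    using assms by (auto simp: segment_loop_def)
  then have "sin (2 * pi * x) = sin (2 * pi * y) \<or> (sin (2 * pi * x) \<le> - \<kappa> \<and> sin (2 * pi * y) \<le> - \<kappa>)"
    by (auto simp: flat_exp_eq_iff)
  moreover have "sin (2 * pi * x) = sin (2 * pi * y) \<or> sin (2 * pi * x) = - sin (2 * pi * y)"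
    using cos by (metis sin_squared_eq power2_eq_iff)
  ultimately have "sin (2 * pi * x) = sin (2 * pi * y)"
    using assms(3) by linarith
  with cos obtain n :: int where "2 * pi * x = 2 * pi * y + 2 * pi * n"
    using sin_cos_eq_iff by metis
  then have "2 * pi * (x - y - n) = 0"
    by (simp add: algebra_simps)
  then have "x - y = n"
    by simp
  moreover have "-1 < x - y" "x - y < 1"
    using x y by auto
  ultimately have "n = 0"
    by simp
  with \<open>x - y = n\<close> show "x = y"
    by simp
qed

lemma segment_loop_has_nonzero_derivative:
  assumes "R \<noteq> 0" "d \<noteq> 0" "\<kappa> > 0"
  obtains v where "v \<noteq> 0" "(segment_loop m R d \<kappa> has_vector_derivative v) (at \<theta>)"
proof -
  let ?s = "sin (2 * pi * \<theta>)" and ?c = "cos (2 * pi * \<theta>)"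
  define v where "v = (- (R * (2 * pi * ?s)), d * (flat_exp_deriv 1 (?s + \<kappa>) * (2 * pi * ?c)))"
  have "((\<lambda>x. m + R * cos (2 * pi * x)) has_real_derivative - (R * (2 * pi * ?s))) (at \<theta>)"
    by (auto intro!: derivative_eq_intros)
  moreover have "((\<lambda>x. sin (2 * pi * x) + \<kappa>) has_real_derivative 2 * pi * ?c) (at \<theta>)"
    by (auto intro!: derivative_eq_intros)
  from DERIV_cmult[OF DERIV_chain2[OF flat_exp_deriv_has_derivative[of 0, unfolded flat_exp_deriv_0] this],
      of d]
  have "((\<lambda>x. d * flat_exp (sin (2 * pi * x) + \<kappa>)) has_real_derivative
      d * (flat_exp_deriv 1 (?s + \<kappa>) * (2 * pi * ?c))) (at \<theta>)"
    by simp
  ultimately have "(segment_loop m R d \<kappa> has_vector_derivative v) (at \<theta>)"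
    unfolding segment_loop_def[abs_def] v_def has_real_derivative_iff_has_vector_derivative
    by (rule has_vector_derivative_Pair)
  moreover have "v \<noteq> 0"
  proof
    assume "v = 0"
    then have "?s = 0"
      using assms by (simp add: v_def zero_prod_def)
    then have "?c \<noteq> 0"
      using sin_cos_squared_add[of "2 * pi * \<theta>"] by auto
    with \<open>?s = 0\<close> \<open>v = 0\<close> show False
      using assms flat_exp_deriv_Suc_0_pos[of \<kappa>] by (simp add: v_def zero_prod_def)
  qed
  ultimately show thesis using that by blast
qed

lemma segment_loop_covers:
  assumes "R > 0" "0 \<le> \<kappa>" "\<kappa> \<le> 1" "\<bar>t - m\<bar> \<le> R * sqrt (1 - \<kappa>\<^sup>2)"
  shows "(t, 0) \<in> segment_loop m R d \<kappa> ` {0..1}"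
proof -
  define c where "c = (t - m) / R"
  have "\<bar>c\<bar> \<le> sqrt (1 - \<kappa>\<^sup>2)"
    using assms by (simp add: c_def abs_div field_simps)
  also have "\<dots> \<le> 1"
    using assms(2,3) by (simp add: power_le_one)
  finally have c: "-1 \<le> c" "c \<le> 1"
    by (auto simp: abs_le_iff)
  have "\<bar>c\<bar>\<^sup>2 \<le> (sqrt (1 - \<kappa>\<^sup>2))\<^sup>2"
    using \<open>\<bar>c\<bar> \<le> sqrt (1 - \<kappa>\<^sup>2)\<close> by (rule power_mono) simp
  then have c2: "c\<^sup>2 \<le> 1 - \<kappa>\<^sup>2"
    using assms(2,3) by (simp add: power_le_one)
  define \<theta> where "\<theta> = 1 - arccos c / (2 * pi)"
  have "0 \<le> arccos c" "arccos c \<le> pi"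
    using arccos_bounded[OF c(1,2)] by auto
  then have "\<theta> \<in> {0..1}"
    by (auto simp: \<theta>_def field_simps)
  have "2 * pi * \<theta> = 2 * pi - arccos c"
    by (simp add: \<theta>_def field_simps)
  then have "cos (2 * pi * \<theta>) = c" "sin (2 * pi * \<theta>) = - sqrt (1 - c\<^sup>2)"
    using c by (simp_all add: sin_arccos)
  moreover have "\<kappa> \<le> sqrt (1 - c\<^sup>2)"
    using c2 assms(2) by (simp add: real_le_rsqrt)
  ultimately have "segment_loop m R d \<kappa> \<theta> = (t, 0)"
    using assms(1) by (simp add: segment_loop_def flat_exp_nonpos c_def)
  with \<open>\<theta> \<in> {0..1}\<close> show ?thesis
    by (metis image_eqI)
qed

definition smooth_simple_loop :: "(real \<Rightarrow> real \<times> real) \<Rightarrow> bool" where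
  "smooth_simple_loop \<gamma> \<longleftrightarrow>
     (\<forall>k. Ck_on k UNIV (\<lambda>\<theta>. fst (\<gamma> \<theta>)) \<and> Ck_on k UNIV (\<lambda>\<theta>. snd (\<gamma> \<theta>))) \<and> (\<forall>\<theta>. \<gamma> (\<theta> + 1) = \<gamma> \<theta>) \<and>
     inj_on \<gamma> {0..<1} \<and> (\<forall>\<theta>. \<exists>v. v \<noteq> 0 \<and> (\<gamma> has_vector_derivative v) (at \<theta>))"

lemma exists_loop_around_segment:
  fixes a b d :: real
  assumes "a < b" "d > 0"
  obtains \<gamma> where "smooth_simple_loop \<gamma>" "range \<gamma> \<subseteq> {a - d..b + d} \<times> {-d..d}" "{a..b} \<times> {0} \<subseteq> \<gamma> ` {0..1}"
proof -
  define h where "h = (b - a) / 2"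
  define R where "R = h + d / 2"
  define \<kappa> where "\<kappa> = sqrt (1 - (h / R)\<^sup>2)"
  have "0 < h" "h < R"
    using assms by (simp_all add: h_def R_def)
  then have hR: "0 < h / R" "h / R < 1"
    by simp_all
  then have "(h / R)\<^sup>2 < 1"
    by (simp add: power_less_one_iff)
  then have \<kappa>: "0 < \<kappa>" "\<kappa> \<le> 1" "R * sqrt (1 - \<kappa>\<^sup>2) = h"
    using hR \<open>h < R\<close> \<open>0 < h\<close> by (simp_all add: \<kappa>_def real_sqrt_le_1_iff)
  have "R \<noteq> 0" "d \<noteq> 0"
    using \<open>0 < h\<close> \<open>h < R\<close> assms(2) by auto
  let ?\<gamma> = "segment_loop ((a + b) / 2) R d \<kappa>"
  have "range ?\<gamma> \<subseteq> {(a + b) / 2 - R..(a + b) / 2 + R} \<times> {0..d}"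
    using \<open>h < R\<close> \<open>0 < h\<close> assms(2) by (intro image_subsetI segment_loop_bounds) auto
  also have "\<dots> \<subseteq> {a - d..b + d} \<times> {-d..d}"
    using assms(2) by (auto simp: R_def h_def field_simps)
  finally have range: "range ?\<gamma> \<subseteq> {a - d..b + d} \<times> {-d..d}" .
  have "(t, 0) \<in> ?\<gamma> ` {0..1}" if "t \<in> {a..b}" for t
  proof (rule segment_loop_covers)
    show "\<bar>t - (a + b) / 2\<bar> \<le> R * sqrt (1 - \<kappa>\<^sup>2)"
      using that unfolding \<kappa>(3) by (auto simp: h_def abs_le_iff field_simps)
  qed (use \<kappa> \<open>0 < h\<close> \<open>h < R\<close> in auto)
  then have cover: "{a..b} \<times> {0} \<subseteq> ?\<gamma> ` {0..1}"
    by auto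
  have deriv: "\<exists>v. v \<noteq> 0 \<and> (?\<gamma> has_vector_derivative v) (at \<theta>)" for \<theta>
    using segment_loop_has_nonzero_derivative[OF \<open>R \<noteq> 0\<close> \<open>d \<noteq> 0\<close> \<open>0 < \<kappa>\<close>, of "(a + b) / 2" \<theta>]
    by blast
  have "smooth_simple_loop ?\<gamma>"
    unfolding smooth_simple_loop_def
    using Ck_on_segment_loop segment_loop_periodic inj_on_segment_loop[OF \<open>R \<noteq> 0\<close> \<open>d \<noteq> 0\<close> \<open>0 < \<kappa>\<close>] deriv
    by blast
  then show thesis
    by (rule that[OF _ range cover])
qed

lemma tube_map_comp_vector_derivative_nonzero:
  assumes "(E has_vector_derivative E' t) (at t)" "(u has_vector_derivative u' t) (at t)"
    and "(\<gamma> has_vector_derivative v) (at \<theta>)" "v \<noteq> 0" "\<gamma> \<theta> = (t, \<sigma>)"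
    and "indep_pair (E' t + \<sigma> *\<^sub>R u' t) (u t)"
  shows "vector_derivative (tube_map E u \<circ> \<gamma>) (at \<theta>) \<noteq> 0"
proof -
  let ?L = "\<lambda>w. fst w *\<^sub>R (E' t + \<sigma> *\<^sub>R u' t) + snd w *\<^sub>R u t"
  have "(\<gamma> has_derivative (\<lambda>h. h *\<^sub>R v)) (at \<theta>)"
    using assms(3) by (simp add: has_vector_derivative_def)
  then have "(tube_map E u \<circ> \<gamma> has_derivative (\<lambda>h. ?L (h *\<^sub>R v))) (at \<theta>)"
    unfolding o_def
    by (rule has_derivative_compose) (simp add: assms(1,2,5) tube_map_has_derivative)
  then have "(tube_map E u \<circ> \<gamma> has_vector_derivative ?L v) (at \<theta>)"
    by (simp add: has_vector_derivative_def algebra_simps)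
  moreover have "?L v \<noteq> 0"
  proof
    assume "?L v = 0"
    then have "fst v = 0 \<and> snd v = 0"
      using assms(6) unfolding indep_pair_def by blast
    with \<open>v \<noteq> 0\<close> show False
      by (simp add: prod_eq_iff)
  qed
  ultimately show ?thesis
    by (simp add: vector_derivative_at)
qed

lemma simple_closed_curve_tube_loop:
  fixes E u :: "real \<Rightarrow> 'a::euclidean_space" and \<gamma> :: "real \<Rightarrow> real \<times> real"
  assumes E: "Cs_on s UNIV E" "\<And>t. (E has_vector_derivative E' t) (at t)"
    and u: "\<And>k. Ck_on k UNIV u" "\<And>t. (u has_vector_derivative u' t) (at t)"
    and "smooth_simple_loop \<gamma>"
    and T: "range \<gamma> \<subseteq> T" "inj_on (tube_map E u) T"
      "\<And>t \<sigma>. (t, \<sigma>) \<in> T \<Longrightarrow> indep_pair (E' t + \<sigma> *\<^sub>R u' t) (u t)"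
  shows "simple_closed_curve_Cs s (tube_map E u ` \<gamma> ` {0..1})"
proof -
  have \<gamma>: "\<And>k. Ck_on k UNIV (\<lambda>\<theta>. fst (\<gamma> \<theta>))" "\<And>k. Ck_on k UNIV (\<lambda>\<theta>. snd (\<gamma> \<theta>))"
    "\<And>\<theta>. \<gamma> (\<theta> + 1) = \<gamma> \<theta>" "inj_on \<gamma> {0..<1}" "\<And>\<theta>. \<exists>v. v \<noteq> 0 \<and> (\<gamma> has_vector_derivative v) (at \<theta>)"
    using \<open>smooth_simple_loop \<gamma>\<close> by (simp_all add: smooth_simple_loop_def)
  let ?g = "tube_map E u \<circ> \<gamma>"
  have "Ck_on k UNIV ?g" if "enat k \<le> s" for k
  proof -
    have "Ck_on k UNIV E"
      using E(1) that by (simp add: Cs_on_iff_Ck_on)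
    then show ?thesis
      unfolding tube_map_def o_def
      by (intro Ck_on_add Ck_on_scaleR Ck_on_compose[OF \<open>Ck_on k UNIV E\<close> \<gamma>(1)]
          Ck_on_compose[OF u(1) \<gamma>(1)] \<gamma>(2))
  qed
  moreover have "inj_on ?g {0..<1}"
    by (rule comp_inj_on[OF \<gamma>(4) inj_on_subset[OF T(2)]]) (use T(1) in auto)
  moreover have "vector_derivative ?g (at \<theta>) \<noteq> 0" for \<theta>
  proof -
    obtain v t \<sigma> where "v \<noteq> 0" "(\<gamma> has_vector_derivative v) (at \<theta>)" "\<gamma> \<theta> = (t, \<sigma>)"
      using \<gamma>(5) by (metis surj_pair)
    moreover have "(t, \<sigma>) \<in> T"
      using T(1) \<open>\<gamma> \<theta> = (t, \<sigma>)\<close> by (metis rangeI subsetD)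
    ultimately show ?thesis
      using tube_map_comp_vector_derivative_nonzero E(2) u(2) T(3) by blast
  qed
  ultimately show ?thesis
    unfolding simple_closed_curve_Cs_def Cs_on_iff_Ck_on
    by (intro exI[of _ ?g]) (simp add: \<gamma>(3) image_comp)
qed

lemma tube_map_image_segment: "tube_map E u ` (S \<times> {0}) = E ` S"
  by (force simp: tube_map_def)

lemma tube_around_arc:
  fixes E E' :: "real \<Rightarrow> 'a::euclidean_space"
  assumes "2 \<le> DIM('a)" "a < b" "inj_on E {a..b}"
    and E: "\<And>t. (E has_vector_derivative E' t) (at t)" "continuous_on UNIV E'" "\<And>t. t \<in> {a..b} \<Longrightarrow> E' t \<noteq> 0"
    and "open \<Omega>" "E ` {a..b} \<subseteq> \<Omega>"
  obtains u u' d where "\<And>k. Ck_on k UNIV u" "\<And>t. (u has_vector_derivative u' t) (at t)" "d > 0"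
    "inj_on (tube_map E u) ({a - d..b + d} \<times> {-d..d})"
    "\<And>t \<sigma>. t \<in> {a - d..b + d} \<Longrightarrow> \<sigma> \<in> {-d..d} \<Longrightarrow> indep_pair (E' t + \<sigma> *\<^sub>R u' t) (u t)"
    "tube_map E u ` ({a - d..b + d} \<times> {-d..d}) \<subseteq> \<Omega>"
proof -
  obtain u where u: "\<And>k. Ck_on k UNIV u" "\<And>t. t \<in> {a..b} \<Longrightarrow> indep_pair (E' t) (u t)"
    using smooth_normal_field[OF \<open>a < b\<close> continuous_on_subset[OF E(2) subset_UNIV] E(3) assms(1)] by blast
  obtain u' where u': "\<And>t. (u has_vector_derivative u' t) (at t)" "Ck_on (Suc 0) UNIV u'"
    using Ck_on_SucE[OF u(1)] by blast
  obtain d where "d > 0" "inj_on (tube_map E u) ({a - d..b + d} \<times> {-d..d})"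
    "\<And>t \<sigma>. t \<in> {a - d..b + d} \<Longrightarrow> \<sigma> \<in> {-d..d} \<Longrightarrow> indep_pair (E' t + \<sigma> *\<^sub>R u' t) (u t)"
    "tube_map E u ` ({a - d..b + d} \<times> {-d..d}) \<subseteq> \<Omega>"
    using tube_map_injective_strip[OF less_imp_le[OF \<open>a < b\<close>] E(1,2) u'(1) Ck_on_imp_continuous_on[OF u'(2)]
        \<open>inj_on E {a..b}\<close> u(2) \<open>open \<Omega>\<close> \<open>E ` {a..b} \<subseteq> \<Omega>\<close>] by blast
  with u(1) u'(1) that show thesis by blast
qed

theorem lemma6p4:
  fixes s :: enat and L :: "(real ^ 'n) set" and \<Omega> :: "(real ^ 'n) set"
  assumes "1 \<le> s" and "CARD('n) \<ge> 2"
    and "arc_Cs s L" and "open \<Omega>" and "L \<subseteq> \<Omega>"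
  shows "\<exists>G. simple_closed_curve_Cs s G \<and> L \<subseteq> G \<and> G \<subseteq> \<Omega>"
proof -
  obtain a b and E E' :: "real \<Rightarrow> real ^ 'n" where "a < b" "L = E ` {a..b}" "inj_on E {a..b}" "Cs_on s UNIV E"
    and E': "\<And>t. (E has_vector_derivative E' t) (at t)" "continuous_on UNIV E'" "\<And>t. t \<in> {a..b} \<Longrightarrow> E' t \<noteq> 0"
    using arc_Cs_extension[OF assms(3,1)] by blast
  have "2 \<le> DIM(real ^ 'n)"
    using assms(2) by simp
  then obtain u u' d where u: "\<And>k. Ck_on k UNIV u" "\<And>t. (u has_vector_derivative u' t) (at t)"
    and "d > 0" and strip: "inj_on (tube_map E u) ({a - d..b + d} \<times> {-d..d})"
      "\<And>t \<sigma>. t \<in> {a - d..b + d} \<Longrightarrow> \<sigma> \<in> {-d..d} \<Longrightarrow> indep_pair (E' t + \<sigma> *\<^sub>R u' t) (u t)"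
      "tube_map E u ` ({a - d..b + d} \<times> {-d..d}) \<subseteq> \<Omega>"
    using tube_around_arc[OF _ \<open>a < b\<close> \<open>inj_on E {a..b}\<close> E' \<open>open \<Omega>\<close>] \<open>L = E ` {a..b}\<close> \<open>L \<subseteq> \<Omega>\<close> by metis
  obtain \<gamma> where "smooth_simple_loop \<gamma>"
    and range: "range \<gamma> \<subseteq> {a - d..b + d} \<times> {-d..d}" and cover: "{a..b} \<times> {0} \<subseteq> \<gamma> ` {0..1}"
    using exists_loop_around_segment[OF \<open>a < b\<close> \<open>d > 0\<close>] by blast
  let ?G = "tube_map E u ` \<gamma> ` {0..1}"
  have "\<gamma> ` {0..1} \<subseteq> {a - d..b + d} \<times> {-d..d}"
    using range by blast
  from image_mono[OF this] strip(3) have "?G \<subseteq> \<Omega>"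
    by (rule order_trans)
  moreover have "simple_closed_curve_Cs s ?G"
    by (rule simple_closed_curve_tube_loop[OF \<open>Cs_on s UNIV E\<close> E'(1) u \<open>smooth_simple_loop \<gamma>\<close> range strip(1)])
      (use strip(2) in auto)
  moreover have "L \<subseteq> ?G"
    using image_mono[OF cover, of "tube_map E u"] \<open>L = E ` {a..b}\<close> by (simp add: tube_map_image_segment)
  ultimately show ?thesis by blast
qed

end
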